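(* Let $A$ be a formula in which the bound variables are pairwise distinct and distinct from the free variables. If the sequent $\vdash A$ (with empty context) has a derivation in LJ$^{+}$, then it also has a derivation in LJB.
   Context: Minimal predicate logic: terms $t ::= x \mid f(t_1,\dots,t_n)$, formulas $A ::= P(t_1,\dots,t_n)\mid A\rightarrow A\mid \forall x\,A$. Positivity: atomic formulas are positive and negative; $A\rightarrow B$ is positive (resp. negative) if $A$ is negative (resp. positive) and $B$ positive (resp. negative); $\forall x\,A$ is positive if $A$ is positive, never negative. A sequent is positive if its context formulas are negative and its right-hand side positive; both calculi below are for positive sequents. LJ$^{+}$: sequents $\Gamma\vdash A$ with $\Gamma$ a finite multiset of formulas, formulas modulo $\alpha$-equivalence; rules (L$\rightarrow$) from $\Gamma, A_1\rightarrow\dots\rightarrow A_n\rightarrow P\vdash A_i$ ($i=1..n$, $n\ge0$) infer $\Gamma, A_1\rightarrow\dots\rightarrow A_n\rightarrow P\vdash P$, $P$ atomic; (R$\forall$) from $\Gamma\vdash A$ infer $\Gamma\vdash\forall x\,A$ if $x$ not free in $\Gamma$; (R$\rightarrow$) from $\Gamma,A\vdash B$ infer $\Gamma\vdash A\rightarrow B$. LJB: an LJB-context is a finite multiset of items; an item is a formula or $[\Gamma]_V$ ($V$ a finite set of variables bound by the bracket, $\Gamma$ an LJB-context); $FV([\Gamma]_V)=FV(\Gamma)\setminus V$. Cleaning rules (anywhere in a context, contexts being multisets): $[I,\Gamma]_V\longrightarrow I,[\Gamma]_V$ if $FV(I)\cap V=\emptyset$; $[\ ]_V\longrightarrow\emptyset$;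 $I\,I\longrightarrow I$. This system terminates; $\Gamma{\downarrow}$ denotes the normal form of $\Gamma$ obtained with a fixed arbitrary strategy. LJB rules apply only to LJB-sequents $\Gamma\vdash A$ with $\Gamma$ in normal form and in which, in each formula, bound variables are pairwise distinct and distinct from free variables; formulas are not identified modulo $\alpha$. Rules: (L$\rightarrow$) from $\Gamma'\vdash A_1,\dots,\Gamma'\vdash A_n$ infer $\Gamma\vdash P$, where $\Gamma=\Gamma_1,[\Gamma_2,[\dots\Gamma_{i-1},[\Gamma_i, A_1\rightarrow\dots\rightarrow A_n\rightarrow P]_{V_{i-1}}\dots]_{V_2}]_{V_1}$ ($i\ge1$), $\Gamma'=([\dots[[\Gamma_1]_{V_1},\Gamma_2]_{V_2},\dots,\Gamma_{i-1}]_{V_{i-1}},\Gamma_i,A_1\rightarrow\dots\rightarrow A_n\rightarrow P){\downarrow}$, $P$ atomic with no free variable in $V_1\cup\dots\cup V_{i-1}$; (R$\forall$) from $[\Gamma]_V{\downarrow}\vdash A$ infer $\Gamma\vdash\forall x\,A$, where $V$ is the set of all variables bound in $\forall x\,A$; (R$\rightarrow$) from $(\Gamma,A){\downarrow}\vdash B$ infer $\Gamma\vdash A\rightarrow B$. *)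

theory Defs
  imports Main "HOL-Library.Multiset"
begin

text \<open>Variables are natural numbers (an infinite supply); function symbols
of type 'f and predicate symbols of type 'p are arbitrary.\<close>

type_synonym var = nat

datatype 'f trm = Var var | Fn 'f "'f trm list"

datatype ('f,'p) form =
    Atom 'p "'f trm list"
  | Imp "('f,'p) form" "('f,'p) form"
  | All var "('f,'p) form"

primrec fvt :: "'f trm \<Rightarrow> var set" where
  "fvt (Var x) = {x}"
| "fvt (Fn f ts) = \<Union> (set (map fvt ts))"

definition fvts :: "'f trm list \<Rightarrow> var set" where
  "fvts ts = \<Union> (fvt ` set ts)"

primrec fv :: "('f,'p) form \<Rightarrow> var set" where
  "fv (Atom p ts) = fvts ts"
| "fv (Imp A B) = fv A \<union> fv B"
| "fv (All x A) = fv A - {x}"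

primrec bvl :: "('f,'p) form \<Rightarrow> var list" where
  "bvl (Atom p ts) = []"
| "bvl (Imp A B) = bvl A @ bvl B"
| "bvl (All x A) = x # bvl A"

definition wf_vars :: "('f,'p) form \<Rightarrow> bool" where
  "wf_vars A \<longleftrightarrow> distinct (bvl A) \<and> set (bvl A) \<inter> fv A = {}"

fun avar :: "(var \<times> var) list \<Rightarrow> var \<Rightarrow> var \<Rightarrow> bool" where
  "avar [] x y = (x = y)"
| "avar ((a,b) # E) x y = (if x = a \<or> y = b then x = a \<and> y = b else avar E x y)"

inductive alpha_t :: "(var \<times> var) list \<Rightarrow> 'f trm \<Rightarrow> 'f trm \<Rightarrow> bool" for E where
  "avar E x y \<Longrightarrow> alpha_t E (Var x) (Var y)"
| "list_all2 (alpha_t E) ts us \<Longrightarrow> alpha_t E (Fn f ts) (Fn f us)"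

fun alpha_f :: "(var \<times> var) list \<Rightarrow> ('f,'p) form \<Rightarrow> ('f,'p) form \<Rightarrow> bool" where
  "alpha_f E (Atom p ts) (Atom q us) = (p = q \<and> list_all2 (alpha_t E) ts us)"
| "alpha_f E (Imp A B) (Imp C D) = (alpha_f E A C \<and> alpha_f E B D)"
| "alpha_f E (All x A) (All y B) = alpha_f ((x,y) # E) A B"
| "alpha_f E _ _ = False"

definition alpha :: "('f,'p) form \<Rightarrow> ('f,'p) form \<Rightarrow> bool" where
  "alpha A B = alpha_f [] A B"

fun pos :: "('f,'p) form \<Rightarrow> bool" and neg :: "('f,'p) form \<Rightarrow> bool" where
  "pos (Atom p ts) = True"
| "pos (Imp A B) = (neg A \<and> pos B)"
| "pos (All x A) = pos A"
| "neg (Atom p ts) = True"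
| "neg (Imp A B) = (pos A \<and> neg B)"
| "neg (All x A) = False"

definition pos_seq :: "('f,'p) form multiset \<Rightarrow> ('f,'p) form \<Rightarrow> bool" where
  "pos_seq \<Gamma> A \<longleftrightarrow> (\<forall>B\<in>#\<Gamma>. neg B) \<and> pos A"

text \<open>Working modulo alpha is modelled by closing derivability under
alpha-equivalence of all formulas of a sequent (rule lj_alpha).\<close>

inductive ljp :: "('f,'p) form multiset \<Rightarrow> ('f,'p) form \<Rightarrow> bool" where
  lj_imp_L: "\<lbrakk> F = foldr Imp As (Atom p ts);
              pos_seq (add_mset F \<Gamma>) (Atom p ts);
              \<forall>a\<in>set As. ljp (add_mset F \<Gamma>) a \<rbrakk>
          \<Longrightarrow> ljp (add_mset F \<Gamma>) (Atom p ts)"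
| lj_all_R: "\<lbrakk> ljp \<Gamma> A; x \<notin> (\<Union>B\<in>set_mset \<Gamma>. fv B); pos_seq \<Gamma> (All x A) \<rbrakk>
          \<Longrightarrow> ljp \<Gamma> (All x A)"
| lj_imp_R: "\<lbrakk> ljp (add_mset A \<Gamma>) B; pos_seq \<Gamma> (Imp A B) \<rbrakk> \<Longrightarrow> ljp \<Gamma> (Imp A B)"
| lj_alpha: "\<lbrakk> ljp \<Gamma> A; rel_mset alpha \<Gamma> \<Gamma>'; alpha A A' \<rbrakk> \<Longrightarrow> ljp \<Gamma>' A'"

datatype ('f,'p) item = Fm "('f,'p) form" | Br "var set" "('f,'p) item multiset"

primrec fvi :: "('f,'p) item \<Rightarrow> var set" where
  "fvi (Fm A) = fv A"
| "fvi (Br V G) = \<Union> (set_mset (image_mset fvi G)) - V"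

primrec formsi :: "('f,'p) item \<Rightarrow> ('f,'p) form set" where
  "formsi (Fm A) = {A}"
| "formsi (Br V G) = \<Union> (set_mset (image_mset formsi G))"

definition ctx_forms :: "('f,'p) item multiset \<Rightarrow> ('f,'p) form set" where
  "ctx_forms G = (\<Union>I\<in>set_mset G. formsi I)"

inductive cstep :: "('f,'p) item multiset \<Rightarrow> ('f,'p) item multiset \<Rightarrow> bool" where
  c_out: "fvi I \<inter> V = {} \<Longrightarrow>
     cstep (add_mset (Br V (add_mset I G)) D) (add_mset I (add_mset (Br V G) D))"
| c_empty: "cstep (add_mset (Br V {#}) D) D"
| c_dup: "cstep (add_mset I (add_mset I D)) (add_mset I D)"
| c_cong: "cstep G G' \<Longrightarrow> cstep (add_mset (Br V G) D) (add_mset (Br V G') D)"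

definition normal :: "('f,'p) item multiset \<Rightarrow> bool" where
  "normal G \<longleftrightarrow> (\<nexists>G'. cstep G G')"

definition nf_strategy :: "(('f,'p) item multiset \<Rightarrow> ('f,'p) item multiset) \<Rightarrow> bool" where
  "nf_strategy nf \<longleftrightarrow> (\<forall>G. cstep\<^sup>*\<^sup>* G (nf G) \<and> normal (nf G))"

definition ljb_seq :: "('f,'p) item multiset \<Rightarrow> ('f,'p) form \<Rightarrow> bool" where
  "ljb_seq G A \<longleftrightarrow> normal G \<and> (\<forall>B\<in>ctx_forms G. wf_vars B \<and> neg B) \<and> wf_vars A \<and> pos A"

text \<open>nest [(G1,V1),...,(G(i-1),V(i-1))] D = G1,[G2,[...G(i-1),[D]_V(i-1)...]_V2]_V1\<close>
primrec nest :: "(('f,'p) item multiset \<times> var set) list \<Rightarrow> ('f,'p) item multiset \<Rightarrow> ('f,'p) item multiset" where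
  "nest [] D = D"
| "nest (GV # L) D = fst GV + {# Br (snd GV) (nest L D) #}"

text \<open>unnest [(G1,V1),...,(G(i-1),V(i-1))] = [...[[G1]_V1,G2]_V2,...,G(i-1)]_V(i-1)
  (the empty context when i = 1).\<close>
definition unnest :: "(('f,'p) item multiset \<times> var set) list \<Rightarrow> ('f,'p) item multiset" where
  "unnest L = foldl (\<lambda>acc GV. {# Br (snd GV) (acc + fst GV) #}) {#} L"

inductive ljb :: "(('f,'p) item multiset \<Rightarrow> ('f,'p) item multiset)
                  \<Rightarrow> ('f,'p) item multiset \<Rightarrow> ('f,'p) form \<Rightarrow> bool" for nf where
  ljb_imp_L: "\<lbrakk> F = foldr Imp As (Atom p ts);
               \<Gamma> = nest L (add_mset (Fm F) Gi);
               ljb_seq \<Gamma> (Atom p ts);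
               fvts ts \<inter> (\<Union>GV\<in>set L. snd GV) = {};
               \<forall>a\<in>set As. ljb nf (nf (unnest L + Gi + {# Fm F #})) a \<rbrakk>
           \<Longrightarrow> ljb nf \<Gamma> (Atom p ts)"
| ljb_all_R: "\<lbrakk> ljb nf (nf {# Br (set (bvl (All x A))) \<Gamma> #}) A; ljb_seq \<Gamma> (All x A) \<rbrakk>
           \<Longrightarrow> ljb nf \<Gamma> (All x A)"
| ljb_imp_R: "\<lbrakk> ljb nf (nf (add_mset (Fm A) \<Gamma>)) B; ljb_seq \<Gamma> (Imp A B) \<rbrakk>
           \<Longrightarrow> ljb nf \<Gamma> (Imp A B)"

end

(* The LJ+ derivation is simulated bottom-up by an LJB derivation. An LJB context
   is related to an LJ+ context through its openings: flattenings in which each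
   entered bracket [H]_V has its bound variables V renamed to fresh names.
   Formulas are compared in locally nameless form, hence modulo alpha and up to a
   renaming of free names. The right rules translate directly; for the
   quantifier the new bracket is opened with fresh names, which the eigenvariable
   condition makes harmless. For the left rule, the principal formula lies in an
   opening, hence at the bottom of a chain of nested brackets of the LJB context.
   Rotating these brackets one at a time, [Y]_V, G0 into [G0]_V, Y, transports the
   opening to the premise context of the LJB rule. The renaming relating the
   principal formula to its copy in the context moves the bracket variables out
   of the ambient variables, yet sends the atom of the copy to the atom of the
   goal; so that atom contains no bracket variable, which is the side condition
   of the LJB rule. Cleaning preserves openings, so normalisation is harmless. *)

theory Submission
  imports Defs
begin

section \<open>Locally nameless representation\<close>

text \<open>De Bruijn indices for bound variables, names for free ones: alpha-equivalent
formulas get equal representations, and renaming free names cannot capture.\<close>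

datatype 'f ln_trm = LFree var | LBound nat | LFn 'f "'f ln_trm list"

datatype ('f,'p) ln_form =
    LAtom 'p "'f ln_trm list"
  | LImp "('f,'p) ln_form" "('f,'p) ln_form"
  | LAll "('f,'p) ln_form"

primrec bound_idx :: "var list \<Rightarrow> var \<Rightarrow> nat option" where
  "bound_idx [] v = None"
| "bound_idx (a # E) v = (if a = v then Some 0 else map_option Suc (bound_idx E v))"

text \<open>The list E holds the variables bound above the current position,
innermost first.\<close>

primrec lnt :: "var list \<Rightarrow> 'f trm \<Rightarrow> 'f ln_trm" where
  "lnt E (Var v) = (case bound_idx E v of Some i \<Rightarrow> LBound i | None \<Rightarrow> LFree v)"
| "lnt E (Fn f ts) = LFn f (map (lnt E) ts)"

primrec lnf :: "var list \<Rightarrow> ('f,'p) form \<Rightarrow> ('f,'p) ln_form" where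
  "lnf E (Atom p ts) = LAtom p (map (lnt E) ts)"
| "lnf E (Imp A B) = LImp (lnf E A) (lnf E B)"
| "lnf E (All x A) = LAll (lnf (x # E) A)"

primrec ren_trm :: "(var \<Rightarrow> var) \<Rightarrow> 'f ln_trm \<Rightarrow> 'f ln_trm" where
  "ren_trm f (LFree v) = LFree (f v)"
| "ren_trm f (LBound i) = LBound i"
| "ren_trm f (LFn g ts) = LFn g (map (ren_trm f) ts)"

primrec ren :: "(var \<Rightarrow> var) \<Rightarrow> ('f,'p) ln_form \<Rightarrow> ('f,'p) ln_form" where
  "ren f (LAtom p ts) = LAtom p (map (ren_trm f) ts)"
| "ren f (LImp A B) = LImp (ren f A) (ren f B)"
| "ren f (LAll A) = LAll (ren f A)"

primrec lfv_trm :: "'f ln_trm \<Rightarrow> var set" where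
  "lfv_trm (LFree v) = {v}"
| "lfv_trm (LBound i) = {}"
| "lfv_trm (LFn g ts) = \<Union> (set (map lfv_trm ts))"

primrec lfv :: "('f,'p) ln_form \<Rightarrow> var set" where
  "lfv (LAtom p ts) = \<Union> (set (map lfv_trm ts))"
| "lfv (LImp A B) = lfv A \<union> lfv B"
| "lfv (LAll A) = lfv A"

lemma bound_idx_None_iff: "bound_idx E v = None \<longleftrightarrow> v \<notin> set E"
  by (induct E) auto

lemma bound_idx_SomeD: "bound_idx E v = Some i \<Longrightarrow> v \<in> set E \<and> i < length E"
  by (induct E arbitrary: i) (auto split: if_splits)

lemma bound_idx_snoc:
  "bound_idx (E @ [x]) u =
     (case bound_idx E u of Some i \<Rightarrow> Some i | None \<Rightarrow> if u = x then Some (length E) else None)"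
  by (induct E) (auto split: option.splits)

lemma ren_trm_cong: "(\<And>v. v \<in> lfv_trm t \<Longrightarrow> f v = g v) \<Longrightarrow> ren_trm f t = ren_trm g t"
  by (induct t) auto

lemma ren_cong: "(\<And>v. v \<in> lfv A \<Longrightarrow> f v = g v) \<Longrightarrow> ren f A = ren g A"
  by (induct A) (auto intro: ren_trm_cong)

lemma ren_trm_comp: "ren_trm f (ren_trm g t) = ren_trm (f \<circ> g) t"
  by (induct t) (auto simp: comp_def)

lemma ren_comp: "ren f (ren g A) = ren (f \<circ> g) A"
  by (induct A) (auto simp: ren_trm_comp comp_def)

lemma ren_trm_ident [simp]: "ren_trm (\<lambda>v. v) t = t"
  by (induct t) (auto intro: map_idI)

lemma ren_trm_id [simp]: "ren_trm id t = t"
  by (simp add: id_def)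

lemma ren_ident [simp]: "ren (\<lambda>v. v) A = A"
  by (induct A) (auto intro: map_idI)

lemma ren_id [simp]: "ren id A = A"
  by (simp add: id_def)

lemma lfv_trm_ren_trm: "lfv_trm (ren_trm f t) = f ` lfv_trm t"
  by (induct t) auto

lemma lfv_ren: "lfv (ren f A) = f ` lfv A"
  by (induct A) (auto simp: lfv_trm_ren_trm)

lemma lfv_trm_lnt: "lfv_trm (lnt E t) = fvt t - set E"
  by (induct t) (auto split: option.splits simp: bound_idx_None_iff dest: bound_idx_SomeD)

lemma lfv_lnf: "lfv (lnf E A) = fv A - set E"
  by (induct A arbitrary: E) (auto simp: lfv_trm_lnt fvts_def)

lemma lnt_Nil_inject: "lnt [] t = lnt [] s \<Longrightarrow> t = s"
proof (induct t arbitrary: s)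
  case (Var x)
  then show ?case by (cases s) auto
next
  case (Fn f ts)
  show ?case
  proof (cases s)
    case (Var w)
    with Fn.prems show ?thesis by (auto split: option.splits)
  next
    case (Fn g us)
    with Fn.prems have "g = f" "length us = length ts" "\<forall>i<length ts. lnt [] (ts ! i) = lnt [] (us ! i)"
      by (auto simp: list_eq_iff_nth_eq)
    with Fn Fn.hyps[OF nth_mem] show ?thesis by (auto simp: list_eq_iff_nth_eq)
  qed
qed

lemma avar_bound_idx:
  "avar E x y \<Longrightarrow>
     bound_idx (map fst E) x = bound_idx (map snd E) y \<and> (bound_idx (map fst E) x = None \<longrightarrow> x = y)"
proof (induct E x y rule: avar.induct)
  case (2 a b E x y)
  then show ?case by (cases "x = a \<or> y = b") auto
qed simp

lemma alpha_t_lnt_eq: "alpha_t E t u \<Longrightarrow> lnt (map fst E) t = lnt (map snd E) u"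
proof (induct rule: alpha_t.induct)
  case (1 x y)
  then show ?case by (auto dest: avar_bound_idx split: option.splits)
next
  case (2 ts us f)
  then show ?case by (auto simp: list_all2_conv_all_nth list_eq_iff_nth_eq)
qed

lemma alpha_f_lnf_eq: "alpha_f E A B \<Longrightarrow> lnf (map fst E) A = lnf (map snd E) B"
  by (induct E A B rule: alpha_f.induct)
    (auto simp: list_all2_conv_all_nth list_eq_iff_nth_eq alpha_t_lnt_eq)

lemma alpha_lnf_eq: "alpha A B \<Longrightarrow> lnf [] A = lnf [] B"
  using alpha_f_lnf_eq[of "[]"] by (simp add: alpha_def)

lemma alpha_f_pos_neg: "alpha_f E A B \<Longrightarrow> (pos A \<longleftrightarrow> pos B) \<and> (neg A \<longleftrightarrow> neg B)"
  by (induct E A B rule: alpha_f.induct) auto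

lemma ljp_pos: "ljp \<Gamma> A \<Longrightarrow> pos A"
  by (induct rule: ljp.induct) (auto simp: pos_seq_def alpha_def dest: alpha_f_pos_neg)

text \<open>x and y are the outermost binders (last in the lists): unbinding them turns
an equation of bodies into one where the renaming sends x to y.\<close>

lemma ren_trm_lnt_snoc:
  "length E = length E' \<Longrightarrow> ren_trm \<sigma> (lnt (E @ [x]) t) = lnt (E' @ [y]) s \<Longrightarrow>
   ren_trm (\<sigma>(x := y)) (lnt E t) = lnt E' s"
proof (induct t arbitrary: s)
  case (Var u)
  then show ?case
    by (cases s) (auto simp: bound_idx_snoc bound_idx_None_iff split: option.splits if_splits
        dest: bound_idx_SomeD)
next
  case (Fn f ts)
  show ?case
  proof (cases s)
    case (Var w)
    with Fn.prems show ?thesis by (auto simp: bound_idx_snoc split: option.splits if_splits)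
  next
    case (Fn g us)
    with Fn.prems have "g = f" "length us = length ts"
      "\<forall>i<length ts. ren_trm \<sigma> (lnt (E @ [x]) (ts ! i)) = lnt (E' @ [y]) (us ! i)"
      by (auto simp: list_eq_iff_nth_eq)
    with Fn.hyps[OF nth_mem] Fn.prems(1)
    have "\<forall>i<length ts. ren_trm (\<sigma>(x := y)) (lnt E (ts ! i)) = lnt E' (us ! i)"
      by blast
    with Fn \<open>g = f\<close> \<open>length us = length ts\<close> show ?thesis
      by (simp add: list_eq_iff_nth_eq del: fun_upd_apply)
  qed
qed

lemma ren_lnf_snoc:
  "length E = length E' \<Longrightarrow> ren \<sigma> (lnf (E @ [x]) A) = lnf (E' @ [y]) B \<Longrightarrow>
   ren (\<sigma>(x := y)) (lnf E A) = lnf E' B"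
proof (induct A arbitrary: B E E')
  case (Atom p ts)
  show ?case
  proof (cases B)
    case (Atom q us)
    with Atom.prems have "q = p" "length us = length ts"
      "\<forall>i<length ts. ren_trm \<sigma> (lnt (E @ [x]) (ts ! i)) = lnt (E' @ [y]) (us ! i)"
      by (auto simp: list_eq_iff_nth_eq)
    with ren_trm_lnt_snoc Atom.prems(1)
    have "\<forall>i<length ts. ren_trm (\<sigma>(x := y)) (lnt E (ts ! i)) = lnt E' (us ! i)"
      by blast
    with Atom \<open>q = p\<close> \<open>length us = length ts\<close> show ?thesis
      by (simp add: list_eq_iff_nth_eq del: fun_upd_apply)
  qed (use Atom.prems in auto)
next
  case (Imp A1 A2)
  then show ?case by (cases B) auto
next
  case (All z A)
  then show ?case by (cases B) (auto dest: All.hyps[where E = "z # E" for E, simplified])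
qed

lemma ren_lnf_All_eqD:
  "ren \<sigma> (lnf [] (All x A)) = lnf [] B \<Longrightarrow>
   \<exists>y B0. B = All y B0 \<and> ren (\<sigma>(x := y)) (lnf [] A) = lnf [] B0"
  by (cases B) (auto intro: ren_lnf_snoc[where E = "[]" and E' = "[]", simplified])

lemma ren_lnf_Imp_eqD:
  "ren \<sigma> (lnf [] (Imp A1 A2)) = ren \<tau> (lnf [] B) \<Longrightarrow>
   \<exists>B1 B2. B = Imp B1 B2 \<and> ren \<sigma> (lnf [] A1) = ren \<tau> (lnf [] B1)
     \<and> ren \<sigma> (lnf [] A2) = ren \<tau> (lnf [] B2)"
  by (cases B) auto

lemma ren_lnf_Atom_eqD:
  "ren \<sigma> (lnf [] (Atom p ts)) = ren \<tau> (lnf [] B) \<Longrightarrow>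
   \<exists>us. B = Atom p us \<and> map (ren_trm \<sigma> \<circ> lnt []) ts = map (ren_trm \<tau> \<circ> lnt []) us"
  by (cases B) auto

lemma ren_lnf_foldr_Imp_eqD:
  "ren \<sigma> (lnf [] (foldr Imp As (Atom p ts))) = ren \<tau> (lnf [] F) \<Longrightarrow>
   \<exists>As' us. F = foldr Imp As' (Atom p us)
     \<and> list_all2 (\<lambda>a a'. ren \<sigma> (lnf [] a) = ren \<tau> (lnf [] a')) As As'
     \<and> map (ren_trm \<sigma> \<circ> lnt []) ts = map (ren_trm \<tau> \<circ> lnt []) us"
proof (induct As arbitrary: F)
  case Nil
  then obtain us where "F = Atom p us" "map (ren_trm \<sigma> \<circ> lnt []) ts = map (ren_trm \<tau> \<circ> lnt []) us"
    using ren_lnf_Atom_eqD by (metis foldr_Nil id_apply)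
  moreover have "list_all2 (\<lambda>a a'. ren \<sigma> (lnf [] a) = ren \<tau> (lnf [] a')) [] []"
    by simp
  ultimately show ?case by (metis foldr_Nil id_apply)
next
  case (Cons a As)
  then obtain B1 B2 where "F = Imp B1 B2" "ren \<sigma> (lnf [] a) = ren \<tau> (lnf [] B1)"
    "ren \<sigma> (lnf [] (foldr Imp As (Atom p ts))) = ren \<tau> (lnf [] B2)"
    using ren_lnf_Imp_eqD[of \<sigma> a "foldr Imp As (Atom p ts)" \<tau> F] by auto
  moreover from Cons.hyps[OF this(3)] obtain As' us where "B2 = foldr Imp As' (Atom p us)"
    "list_all2 (\<lambda>a a'. ren \<sigma> (lnf [] a) = ren \<tau> (lnf [] a')) As As'"
    "map (ren_trm \<sigma> \<circ> lnt []) ts = map (ren_trm \<tau> \<circ> lnt []) us"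
    by blast
  ultimately show ?case by (intro exI[of _ "B1 # As'"] exI[of _ us]) (auto simp: comp_def)
qed

lemma ren_trm_lnt_eq_fixed:
  assumes "ren_trm \<theta> (lnt [] t) = lnt [] u" "fvt t \<subseteq> U" "fvt u \<subseteq> U"
    and "\<forall>v\<in>U. \<theta> v \<in> U \<longrightarrow> \<theta> v = v \<and> v \<notin> W"
  shows "t = u \<and> fvt t \<inter> W = {}"
proof -
  have "\<theta> ` fvt t = fvt u"
    using arg_cong[OF assms(1), of lfv_trm] by (simp add: lfv_trm_ren_trm lfv_trm_lnt)
  with assms(2-4) have fixed: "\<forall>v\<in>fvt t. \<theta> v = v \<and> v \<notin> W" by blast
  then have "ren_trm \<theta> (lnt [] t) = ren_trm id (lnt [] t)"
    by (intro ren_trm_cong) (simp add: lfv_trm_lnt)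
  with assms(1) have "t = u" by (simp add: lnt_Nil_inject)
  with fixed show ?thesis by blast
qed

lemma ren_trms_lnt_eq_fixed:
  assumes "map (ren_trm \<theta> \<circ> lnt []) ts = map (lnt []) us" "fvts ts \<subseteq> U" "fvts us \<subseteq> U"
    and "\<forall>v\<in>U. \<theta> v \<in> U \<longrightarrow> \<theta> v = v \<and> v \<notin> W"
  shows "ts = us \<and> fvts ts \<inter> W = {}"
proof -
  have len: "length ts = length us" using map_eq_imp_length_eq[OF assms(1)] .
  have "ts ! i = us ! i \<and> fvt (ts ! i) \<inter> W = {}" if "i < length ts" for i
  proof (rule ren_trm_lnt_eq_fixed[OF _ _ _ assms(4)])
    show "ren_trm \<theta> (lnt [] (ts ! i)) = lnt [] (us ! i)"
      using assms(1) that len by (metis comp_apply nth_map)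
    have "ts ! i \<in> set ts" "us ! i \<in> set us" using that len by auto
    then show "fvt (ts ! i) \<subseteq> U" "fvt (us ! i) \<subseteq> U"
      using assms(2,3) by (auto simp: fvts_def)
  qed
  with len show ?thesis by (fastforce simp: list_eq_iff_nth_eq fvts_def in_set_conv_nth)
qed

section \<open>Openings of LJB contexts\<close>

text \<open>An opening of an LJB context G is a set \<Delta> of locally nameless formulas
obtained by choosing items of G and entering brackets [H]_V after renaming V
injectively to fresh names, outside the ambient variables U and pairwise
distinct between different bracket entries (a bracket may be entered several
times). N collects the fresh names used and \<theta> is the renaming accumulated on
the way down. An LJ+ context is simulated by a subset of an opening.\<close>

inductive ctx_opening ::
    "var set \<Rightarrow> (var \<Rightarrow> var) \<Rightarrow> ('f,'p) item multiset \<Rightarrow> ('f,'p) ln_form set \<Rightarrow> var set \<Rightarrow> bool"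
  and item_opening ::
    "var set \<Rightarrow> (var \<Rightarrow> var) \<Rightarrow> ('f,'p) item \<Rightarrow> ('f,'p) ln_form set \<Rightarrow> var set \<Rightarrow> bool"
  for U :: "var set" where
  empty: "ctx_opening U \<theta> G {} {}"
| add: "\<lbrakk> ctx_opening U \<theta> G \<Delta> N; I \<in># G; item_opening U \<theta> I \<Delta>I NI; N \<inter> NI = {} \<rbrakk>
    \<Longrightarrow> ctx_opening U \<theta> G (\<Delta> \<union> \<Delta>I) (N \<union> NI)"
| form: "item_opening U \<theta> (Fm A) {ren \<theta> (lnf [] A)} {}"
| bracket: "\<lbrakk> finite V; inj_on a V; a ` V \<inter> U = {}; ctx_opening U (override_on \<theta> a V) H \<Delta> N;
    a ` V \<inter> N = {} \<rbrakk> \<Longrightarrow> item_opening U \<theta> (Br V H) \<Delta> (N \<union> a ` V)"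

inductive_cases item_opening_FmE: "item_opening U \<theta> (Fm A) \<Delta> N"
inductive_cases item_opening_BrE: "item_opening U \<theta> (Br V H) \<Delta> N"

definition fv_ctx :: "('f,'p) item multiset \<Rightarrow> var set" where
  "fv_ctx G = \<Union> (fvi ` set_mset G)"

definition fv_forms :: "('f,'p) item multiset \<Rightarrow> var set" where
  "fv_forms G = \<Union> (fv ` ctx_forms G)"

lemma formsi_Br: "formsi (Br V H) = ctx_forms H"
  by (simp add: ctx_forms_def)

lemma ctx_forms_add_mset [simp]: "ctx_forms (add_mset I G) = formsi I \<union> ctx_forms G"
  by (simp add: ctx_forms_def)

lemma ctx_forms_union [simp]: "ctx_forms (G + H) = ctx_forms G \<union> ctx_forms H"
  by (simp add: ctx_forms_def)

lemma ctx_forms_empty [simp]: "ctx_forms {#} = {}"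
  by (simp add: ctx_forms_def)

lemma fv_formsi_subset: "I \<in># G \<Longrightarrow> \<Union> (fv ` formsi I) \<subseteq> fv_forms G"
  by (auto simp: fv_forms_def ctx_forms_def)

lemma fv_forms_Br_subset: "Br V H \<in># G \<Longrightarrow> fv_forms H \<subseteq> fv_forms G"
  using fv_formsi_subset[of "Br V H" G] unfolding formsi_Br by (simp add: fv_forms_def)

lemma fvi_subset_fv_formsi: "fvi I \<subseteq> \<Union> (fv ` formsi I)"
  by (induct I) auto

lemma fvi_subset_fv_ctx: "I \<in># G \<Longrightarrow> fvi I \<subseteq> fv_ctx G"
  by (auto simp: fv_ctx_def)

lemma fv_ctx_subset_fv_forms: "fv_ctx G \<subseteq> fv_forms G"
  using fvi_subset_fv_formsi by (fastforce simp: fv_ctx_def fv_forms_def ctx_forms_def)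

lemma ctx_opening_induct [consumes 1, case_names empty add]:
  assumes "ctx_opening U \<theta> G \<Delta> N"
    and "P {} {}"
    and "\<And>\<Delta> N I \<Delta>I NI. \<lbrakk> ctx_opening U \<theta> G \<Delta> N; P \<Delta> N; I \<in># G;
           item_opening U \<theta> I \<Delta>I NI; N \<inter> NI = {} \<rbrakk> \<Longrightarrow> P (\<Delta> \<union> \<Delta>I) (N \<union> NI)"
  shows "P \<Delta> N"
proof -
  have "ctx_opening U \<theta>' G' \<Delta> N \<Longrightarrow> \<theta>' = \<theta> \<Longrightarrow> G' = G \<Longrightarrow> P \<Delta> N" for \<theta>' G' \<Delta> N
    by (induct rule: ctx_opening_item_opening.inducts(1)[where ?P2.0 = "\<lambda>_ _ _ _. True"])
      (auto intro: assms(2,3))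
  with assms(1) show ?thesis by blast
qed

lemma opening_fresh_names:
  shows "ctx_opening U \<theta> G \<Delta> N \<Longrightarrow> finite N \<and> N \<inter> U = {}"
    and "item_opening U \<theta> I \<Delta> N \<Longrightarrow> finite N \<and> N \<inter> U = {}"
  by (induct rule: ctx_opening_item_opening.inducts) auto

lemma fresh_renaming_exists:
  fixes S :: "var set"
  assumes "finite S"
  obtains b :: "var \<Rightarrow> var" where "inj b" "range b \<inter> S = {}"
proof
  let ?k = "Suc (Max (insert 0 S))"
  show "inj (\<lambda>v. v + ?k)" by (rule injI) simp
  have "n \<le> Max (insert 0 S)" if "n \<in> S" for n
    using assms that by simp
  then show "range (\<lambda>v. v + ?k) \<inter> S = {}" by force
qed

lemma ctx_opening_mono:
  "ctx_opening U \<theta> G \<Delta> N \<Longrightarrow> set_mset G \<subseteq> set_mset G' \<Longrightarrow> ctx_opening U \<theta> G' \<Delta> N"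
  by (induct rule: ctx_opening_induct) (auto intro: ctx_opening_item_opening.intros)

lemma ctx_opening_single: "I \<in># G \<Longrightarrow> item_opening U \<theta> I \<Delta> N \<Longrightarrow> ctx_opening U \<theta> G \<Delta> N"
  using ctx_opening_item_opening.add[OF ctx_opening_item_opening.empty, of I G U \<theta> \<Delta> N] by simp

lemma ctx_opening_insert_form:
  "ctx_opening U \<theta> G \<Delta> N \<Longrightarrow> Fm A \<in># G \<Longrightarrow> ctx_opening U \<theta> G (insert (ren \<theta> (lnf [] A)) \<Delta>) N"
  using ctx_opening_item_opening.add[OF _ _ ctx_opening_item_opening.form, of U \<theta> G \<Delta> N A]
  by simp

lemma ctx_opening_Un:
  "ctx_opening U \<theta> G \<Delta>2 N2 \<Longrightarrow> ctx_opening U \<theta> G \<Delta>1 N1 \<Longrightarrow> N1 \<inter> N2 = {} \<Longrightarrow>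
   ctx_opening U \<theta> G (\<Delta>1 \<union> \<Delta>2) (N1 \<union> N2)"
proof (induct rule: ctx_opening_induct)
  case (add \<Delta> N I \<Delta>I NI)
  then have "ctx_opening U \<theta> G (\<Delta>1 \<union> \<Delta>) (N1 \<union> N)" by blast
  from ctx_opening_item_opening.add[OF this add.hyps(3,4)] add.hyps(5) add.prems
  have "ctx_opening U \<theta> G ((\<Delta>1 \<union> \<Delta>) \<union> \<Delta>I) ((N1 \<union> N) \<union> NI)" by blast
  then show ?case by (simp add: Un_assoc)
qed simp

lemma ctx_opening_locate:
  "ctx_opening U \<theta> G \<Delta> N \<Longrightarrow> D \<in> \<Delta> \<Longrightarrow>
   \<exists>I \<Delta>I NI \<Delta>r Nr. I \<in># G \<and> item_opening U \<theta> I \<Delta>I NI \<and> D \<in> \<Delta>I \<and> ctx_opening U \<theta> G \<Delta>r Nr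
     \<and> \<Delta> = \<Delta>r \<union> \<Delta>I \<and> N = Nr \<union> NI \<and> Nr \<inter> NI = {}"
proof (induct arbitrary: D rule: ctx_opening_induct)
  case (add \<Delta> N I \<Delta>I NI)
  show ?case
  proof (cases "D \<in> \<Delta>I")
    case True
    with add show ?thesis by blast
  next
    case False
    with add obtain J \<Delta>J NJ \<Delta>r Nr where J: "J \<in># G" "item_opening U \<theta> J \<Delta>J NJ" "D \<in> \<Delta>J"
      "ctx_opening U \<theta> G \<Delta>r Nr" "\<Delta> = \<Delta>r \<union> \<Delta>J" "N = Nr \<union> NJ" "Nr \<inter> NJ = {}"
      by blast
    with add have "ctx_opening U \<theta> G (\<Delta>r \<union> \<Delta>I) (Nr \<union> NI)"
      by (intro ctx_opening_item_opening.add) auto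
    with J add(5) show ?thesis
      by (intro exI[of _ J] exI[of _ \<Delta>J] exI[of _ NJ] exI[of _ "\<Delta>r \<union> \<Delta>I"] exI[of _ "Nr \<union> NI"]) auto
  qed
qed simp

lemma ctx_opening_empty_ctx: "ctx_opening U \<theta> {#} \<Delta> N \<Longrightarrow> \<Delta> = {}"
  by (induct rule: ctx_opening_induct) auto

lemma ctx_opening_split:
  "ctx_opening U \<theta> G \<Delta> N \<Longrightarrow> set_mset G \<subseteq> set_mset A \<union> set_mset B \<Longrightarrow>
   \<exists>\<Delta>1 N1 \<Delta>2 N2. ctx_opening U \<theta> A \<Delta>1 N1 \<and> ctx_opening U \<theta> B \<Delta>2 N2
     \<and> \<Delta> = \<Delta>1 \<union> \<Delta>2 \<and> N = N1 \<union> N2 \<and> N1 \<inter> N2 = {}"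
proof (induct rule: ctx_opening_induct)
  case empty
  then show ?case using ctx_opening_item_opening.empty by blast
next
  case (add \<Delta> N I \<Delta>I NI)
  then obtain \<Delta>1 N1 \<Delta>2 N2 where h: "ctx_opening U \<theta> A \<Delta>1 N1" "ctx_opening U \<theta> B \<Delta>2 N2"
    "\<Delta> = \<Delta>1 \<union> \<Delta>2" "N = N1 \<union> N2" "N1 \<inter> N2 = {}"
    by blast
  consider "I \<in># A" | "I \<in># B"
    using add.hyps(3) add.prems by auto
  then show ?case
  proof cases
    case 1
    with h add.hyps have "ctx_opening U \<theta> A (\<Delta>1 \<union> \<Delta>I) (N1 \<union> NI)"
      by (intro ctx_opening_item_opening.add) auto
    with h add.hyps(5) show ?thesis
      by (intro exI[of _ "\<Delta>1 \<union> \<Delta>I"] exI[of _ "N1 \<union> NI"] exI[of _ \<Delta>2] exI[of _ N2]) auto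
  next
    case 2
    with h add.hyps have "ctx_opening U \<theta> B (\<Delta>2 \<union> \<Delta>I) (N2 \<union> NI)"
      by (intro ctx_opening_item_opening.add) auto
    with h add.hyps(5) show ?thesis
      by (intro exI[of _ \<Delta>1] exI[of _ N1] exI[of _ "\<Delta>2 \<union> \<Delta>I"] exI[of _ "N2 \<union> NI"]) auto
  qed
qed

lemma comp_override_on:
  "(\<And>v. v \<in> V \<Longrightarrow> \<pi> (a v) = a v) \<Longrightarrow> \<pi> \<circ> override_on \<theta> a V = override_on (\<pi> \<circ> \<theta>) a V"
  by (auto simp: override_on_def)

lemma opening_ren:
  shows "ctx_opening U \<theta> G \<Delta> N \<Longrightarrow> \<forall>n\<in>N. \<pi> n = n \<Longrightarrow>
           ctx_opening U (\<pi> \<circ> \<theta>) G (ren \<pi> ` \<Delta>) N"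
    and "item_opening U \<theta> I \<Delta> N \<Longrightarrow> \<forall>n\<in>N. \<pi> n = n \<Longrightarrow>
           item_opening U (\<pi> \<circ> \<theta>) I (ren \<pi> ` \<Delta>) N"
proof (induct rule: ctx_opening_item_opening.inducts)
  case (empty \<theta> G)
  show ?case using ctx_opening_item_opening.empty by simp
next
  case (add \<theta> G \<Delta> N I \<Delta>I NI)
  then show ?case by (auto simp: image_Un intro: ctx_opening_item_opening.add)
next
  case (form \<theta> A)
  show ?case using ctx_opening_item_opening.form[of U "\<pi> \<circ> \<theta>" A] by (simp add: ren_comp comp_def)
next
  case (bracket V a \<theta> H \<Delta> N)
  have "\<pi> \<circ> override_on \<theta> a V = override_on (\<pi> \<circ> \<theta>) a V"
    using bracket.prems by (intro comp_override_on) auto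
  with bracket.hyps(5) bracket.prems
  have "ctx_opening U (override_on (\<pi> \<circ> \<theta>) a V) H (ren \<pi> ` \<Delta>) N" by auto
  with bracket.hyps(1-3,6) have "item_opening U (\<pi> \<circ> \<theta>) (Br V H) (ren \<pi> ` \<Delta>) (N \<union> a ` V)"
    by (intro ctx_opening_item_opening.bracket)
  then show ?case by (simp add: comp_def)
qed

lemma opening_cong:
  shows "ctx_opening U \<theta>1 G \<Delta> N \<Longrightarrow> \<forall>v\<in>fv_ctx G. \<theta>1 v = \<theta>2 v \<Longrightarrow>
           ctx_opening U \<theta>2 G \<Delta> N"
    and "item_opening U \<theta>1 I \<Delta> N \<Longrightarrow> \<forall>v\<in>fvi I. \<theta>1 v = \<theta>2 v \<Longrightarrow>
           item_opening U \<theta>2 I \<Delta> N"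
proof (induct arbitrary: \<theta>2 and \<theta>2 rule: ctx_opening_item_opening.inducts)
  case (empty \<theta> G)
  show ?case by (rule ctx_opening_item_opening.empty)
next
  case (add \<theta> G \<Delta> N I \<Delta>I NI)
  have "ctx_opening U \<theta>2 G \<Delta> N"
    using add.hyps(2) add.prems by blast
  moreover have "item_opening U \<theta>2 I \<Delta>I NI"
    using add.hyps(5) add.prems fvi_subset_fv_ctx[OF add.hyps(3)] by blast
  ultimately show ?case using ctx_opening_item_opening.add add.hyps(3,6) by blast
next
  case (form \<theta> A)
  then have "ren \<theta> (lnf [] A) = ren \<theta>2 (lnf [] A)"
    by (intro ren_cong) (simp add: lfv_lnf)
  then show ?case using ctx_opening_item_opening.form[of U \<theta>2 A] by simp
next
  case (bracket V a \<theta> H \<Delta> N)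
  have "override_on \<theta> a V v = override_on \<theta>2 a V v" if "v \<in> fv_ctx H" for v
    using that bracket.prems by (auto simp: override_on_def fv_ctx_def)
  with bracket show ?case by (auto intro: ctx_opening_item_opening.bracket)
qed

lemma opening_ren_cong:
  shows "ctx_opening U \<theta> G \<Delta> N \<Longrightarrow> \<forall>n\<in>N. \<pi> n = n \<Longrightarrow> \<forall>v\<in>fv_ctx G. \<pi> (\<theta> v) = \<theta>' v \<Longrightarrow>
           ctx_opening U \<theta>' G (ren \<pi> ` \<Delta>) N"
    and "item_opening U \<theta> I \<Delta> N \<Longrightarrow> \<forall>n\<in>N. \<pi> n = n \<Longrightarrow> \<forall>v\<in>fvi I. \<pi> (\<theta> v) = \<theta>' v \<Longrightarrow>
           item_opening U \<theta>' I (ren \<pi> ` \<Delta>) N"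
  using opening_cong(1)[OF opening_ren(1)] opening_cong(2)[OF opening_ren(2)] by auto

lemma opening_lfv:
  shows "ctx_opening U \<theta> G \<Delta> N \<Longrightarrow> D \<in> \<Delta> \<Longrightarrow> lfv D \<subseteq> \<theta> ` fv_forms G \<union> N"
    and "item_opening U \<theta> I \<Delta> N \<Longrightarrow> D \<in> \<Delta> \<Longrightarrow> lfv D \<subseteq> \<theta> ` \<Union> (fv ` formsi I) \<union> N"
proof (induct arbitrary: D and D rule: ctx_opening_item_opening.inducts)
  case (add \<theta> G \<Delta> N I \<Delta>I NI)
  then show ?case using fv_formsi_subset[OF add.hyps(3)] by blast
next
  case (form \<theta> A)
  then show ?case by (simp add: lfv_ren lfv_lnf)
next
  case (bracket V a \<theta> H \<Delta> N)
  then have "lfv D \<subseteq> override_on \<theta> a V ` fv_forms H \<union> N" by blast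
  then show ?case by (auto simp: override_on_def fv_forms_def ctx_forms_def)
qed simp

lemma ctx_opening_transfer:
  assumes "ctx_opening U \<theta> G \<Delta> N"
    and "\<And>I \<Delta>I NI. I \<in># G \<Longrightarrow> item_opening U \<theta> I \<Delta>I NI \<Longrightarrow>
           \<exists>NI'. NI' \<subseteq> NI \<and> ctx_opening U \<theta> G' \<Delta>I NI'"
  shows "\<exists>N'. N' \<subseteq> N \<and> ctx_opening U \<theta> G' \<Delta> N'"
  using assms(1)
proof (induct rule: ctx_opening_induct)
  case empty
  then show ?case using ctx_opening_item_opening.empty by blast
next
  case (add \<Delta> N I \<Delta>I NI)
  from add.hyps(2) obtain N1 where 1: "N1 \<subseteq> N" "ctx_opening U \<theta> G' \<Delta> N1" by blast
  from assms(2)[OF add.hyps(3,4)] obtain N2 where 2: "N2 \<subseteq> NI" "ctx_opening U \<theta> G' \<Delta>I N2"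
    by blast
  from 1 2 add.hyps(5) have "ctx_opening U \<theta> G' (\<Delta> \<union> \<Delta>I) (N1 \<union> N2)"
    by (intro ctx_opening_Un) auto
  moreover have "N1 \<union> N2 \<subseteq> N \<union> NI" using 1 2 by blast
  ultimately show ?case by blast
qed

lemma ctx_opening_replace_item:
  assumes "ctx_opening U \<theta> (add_mset I D) \<Delta> N" and "set_mset D \<subseteq> set_mset G'"
    and "\<And>\<Delta>I NI. item_opening U \<theta> I \<Delta>I NI \<Longrightarrow> \<exists>NI'. NI' \<subseteq> NI \<and> ctx_opening U \<theta> G' \<Delta>I NI'"
  shows "\<exists>N'. N' \<subseteq> N \<and> ctx_opening U \<theta> G' \<Delta> N'"
  using assms(1)
proof (rule ctx_opening_transfer)
  fix J \<Delta>J NJ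
  assume J: "J \<in># add_mset I D" "item_opening U \<theta> J \<Delta>J NJ"
  show "\<exists>NJ'. NJ' \<subseteq> NJ \<and> ctx_opening U \<theta> G' \<Delta>J NJ'"
  proof (cases "J = I")
    case True
    with J(2) assms(3) show ?thesis by blast
  next
    case False
    with J assms(2) have "ctx_opening U \<theta> G' \<Delta>J NJ" by (auto intro: ctx_opening_single)
    then show ?thesis by blast
  qed
qed

lemma item_opening_bracket_out:
  assumes "item_opening U \<theta> (Br V (add_mset I H)) \<Delta> N" and "fvi I \<inter> V = {}"
    and "I \<in># G" and "Br V H \<in># G"
  shows "ctx_opening U \<theta> G \<Delta> N"
proof -
  from assms(1) obtain a N' where a: "finite V" "inj_on a V" "a ` V \<inter> U = {}"
    "ctx_opening U (override_on \<theta> a V) (add_mset I H) \<Delta> N'" "a ` V \<inter> N' = {}"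
    "N = N' \<union> a ` V"
    by (auto elim: item_opening_BrE)
  from ctx_opening_split[OF a(4), of "{#I#}" H] obtain \<Delta>1 N1 \<Delta>2 N2 where s:
    "ctx_opening U (override_on \<theta> a V) {#I#} \<Delta>1 N1"
    "ctx_opening U (override_on \<theta> a V) H \<Delta>2 N2" "\<Delta> = \<Delta>1 \<union> \<Delta>2" "N' = N1 \<union> N2" "N1 \<inter> N2 = {}"
    by auto
  have "ctx_opening U \<theta> {#I#} \<Delta>1 N1"
    by (rule opening_cong(1)[OF s(1)]) (use assms(2) in \<open>auto simp: override_on_def fv_ctx_def\<close>)
  then have "ctx_opening U \<theta> G \<Delta>1 N1"
    by (rule ctx_opening_mono) (use assms(3) in auto)
  moreover have "item_opening U \<theta> (Br V H) \<Delta>2 (N2 \<union> a ` V)"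
    using a s by (intro ctx_opening_item_opening.bracket) auto
  then have "ctx_opening U \<theta> G \<Delta>2 (N2 \<union> a ` V)"
    using assms(4) by (intro ctx_opening_single)
  ultimately show ?thesis
    using s a ctx_opening_Un[of U \<theta> G \<Delta>2 "N2 \<union> a ` V" \<Delta>1 N1] by (auto simp: Un_assoc)
qed

lemma cstep_ctx_opening:
  fixes \<Delta> :: "('f,'p) ln_form set"
  shows "cstep G G' \<Longrightarrow> ctx_opening U \<theta> G \<Delta> N \<Longrightarrow> \<exists>N'. N' \<subseteq> N \<and> ctx_opening U \<theta> G' \<Delta> N'"
proof (induct arbitrary: \<theta> \<Delta> N rule: cstep.induct)
  case (c_out I V G D)
  show ?case
  proof (rule ctx_opening_replace_item[OF c_out.prems])
    fix \<Delta>I NI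
    assume "item_opening U \<theta> (Br V (add_mset I G)) \<Delta>I NI"
    then have "ctx_opening U \<theta> (add_mset I (add_mset (Br V G) D)) \<Delta>I NI"
      by (rule item_opening_bracket_out[OF _ c_out.hyps]) auto
    then show "\<exists>NI'. NI' \<subseteq> NI \<and> ctx_opening U \<theta> (add_mset I (add_mset (Br V G) D)) \<Delta>I NI'"
      by blast
  qed auto
next
  case (c_empty V D)
  show ?case
  proof (rule ctx_opening_replace_item[OF c_empty])
    fix \<Delta>I :: "('f,'p) ln_form set" and NI
    assume "item_opening U \<theta> (Br V {#}) \<Delta>I NI"
    then have "\<Delta>I = {}" by (auto elim: item_opening_BrE dest: ctx_opening_empty_ctx)
    then show "\<exists>NI'. NI' \<subseteq> NI \<and> ctx_opening U \<theta> D \<Delta>I NI'"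
      using ctx_opening_item_opening.empty by blast
  qed simp
next
  case (c_dup I D)
  then have "ctx_opening U \<theta> (add_mset I D) \<Delta> N" by (rule ctx_opening_mono) auto
  then show ?case by blast
next
  case (c_cong G G' V D)
  show ?case
  proof (rule ctx_opening_replace_item[OF c_cong.prems])
    fix \<Delta>I NI
    assume "item_opening U \<theta> (Br V G) \<Delta>I NI"
    then obtain a N'' where a: "finite V" "inj_on a V" "a ` V \<inter> U = {}"
      "ctx_opening U (override_on \<theta> a V) G \<Delta>I N''" "a ` V \<inter> N'' = {}" "NI = N'' \<union> a ` V"
      by (auto elim: item_opening_BrE)
    from c_cong.hyps(2)[OF a(4)] obtain N3 where "N3 \<subseteq> N''"
      "ctx_opening U (override_on \<theta> a V) G' \<Delta>I N3"
      by blast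
    with a have "item_opening U \<theta> (Br V G') \<Delta>I (N3 \<union> a ` V)"
      by (intro ctx_opening_item_opening.bracket) auto
    then have "ctx_opening U \<theta> (add_mset (Br V G') D) \<Delta>I (N3 \<union> a ` V)"
      by (intro ctx_opening_single) auto
    moreover have "N3 \<union> a ` V \<subseteq> NI" using \<open>N3 \<subseteq> N''\<close> a(6) by blast
    ultimately show "\<exists>NI'. NI' \<subseteq> NI \<and> ctx_opening U \<theta> (add_mset (Br V G') D) \<Delta>I NI'"
      by blast
  qed auto
qed

lemma cstep_ctx_forms: "cstep G G' \<Longrightarrow> ctx_forms G' \<subseteq> ctx_forms G"
  by (induct rule: cstep.induct) (auto simp: ctx_forms_def)

lemma nf_strategy_ctx_forms: "nf_strategy nf \<Longrightarrow> ctx_forms (nf G) \<subseteq> ctx_forms G"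
proof -
  have "cstep\<^sup>*\<^sup>* G G' \<Longrightarrow> ctx_forms G' \<subseteq> ctx_forms G" for G'
    by (induct rule: rtranclp_induct) (use cstep_ctx_forms in auto)
  then show "nf_strategy nf \<Longrightarrow> ctx_forms (nf G) \<subseteq> ctx_forms G"
    by (simp add: nf_strategy_def)
qed

lemma nf_strategy_ctx_opening:
  assumes "nf_strategy nf" and "ctx_opening U \<theta> G \<Delta> N"
  shows "\<exists>N'. ctx_opening U \<theta> (nf G) \<Delta> N'"
proof -
  have "cstep\<^sup>*\<^sup>* G G' \<Longrightarrow> \<exists>N'. N' \<subseteq> N \<and> ctx_opening U \<theta> G' \<Delta> N'" for G'
  proof (induct rule: rtranclp_induct)
    case base
    then show ?case using assms(2) by blast
  next
    case (step G' G'')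
    then show ?case using cstep_ctx_opening by (meson order_trans)
  qed
  then show ?thesis using assms(1) unfolding nf_strategy_def by blast
qed

section \<open>Rotating a bracket to the top level\<close>

text \<open>Rotating the context [Y]_V, G0 into [G0]_V, Y is the elementary step
behind the premise contexts of the LJB left rule. An opening of the former is
transported to the latter by the renaming rot_ren m b V U: the fresh names of
the entries into [Y]_V go back to V via the partial map m, the ambient
occurrences of V, now captured by [G0]_V, go to fresh names b.\<close>

definition rot_ren :: "(var \<Rightarrow> var option) \<Rightarrow> (var \<Rightarrow> var) \<Rightarrow> var set \<Rightarrow> var set \<Rightarrow> var \<Rightarrow> var" where
  "rot_ren m b V U n = (case m n of Some v \<Rightarrow> v | None \<Rightarrow> if n \<in> V \<inter> U then b n else n)"

lemma rot_ren_ambient: "n \<in> U \<Longrightarrow> m n = None \<Longrightarrow> rot_ren m b V U n = override_on id b V n"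
  by (simp add: rot_ren_def override_on_def)

lemma rot_ren_fixed: "m n = None \<Longrightarrow> n \<notin> U \<Longrightarrow> rot_ren m b V U n = n"
  by (simp add: rot_ren_def)

text \<open>Each entry into [Y]_V is undone by mapping its fresh names back to V; the
partial map m collects these inverses, starting from m0.\<close>

lemma bracket_entries_rotation:
  assumes "ctx_opening U id G \<Delta> N" and "set_mset G \<subseteq> {Br V Y}" and "fv_forms Y \<subseteq> U"
  shows "dom m0 \<inter> (N \<union> U) = {} \<Longrightarrow>
    \<exists>m \<Delta>b Nb. ctx_opening U id Y \<Delta>b Nb \<and> Nb \<subseteq> N \<and> (\<forall>n\<in>dom m0. m n = m0 n)
      \<and> dom m \<subseteq> dom m0 \<union> N \<and> (\<forall>D\<in>\<Delta>. ren (rot_ren m b V U) D \<in> \<Delta>b)"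
  using assms(1)
proof (induct rule: ctx_opening_induct)
  case empty
  show ?case
    by (intro exI[of _ m0] exI[of _ "{}"]) (auto intro: ctx_opening_item_opening.empty)
next
  case (add \<Delta> N I \<Delta>I NI)
  from add.prems have "dom m0 \<inter> (N \<union> U) = {}" by auto
  from add.hyps(2)[OF this] obtain m \<Delta>b Nb where IH: "ctx_opening U id Y \<Delta>b Nb" "Nb \<subseteq> N"
    "\<forall>n\<in>dom m0. m n = m0 n" "dom m \<subseteq> dom m0 \<union> N" "\<forall>D\<in>\<Delta>. ren (rot_ren m b V U) D \<in> \<Delta>b"
    by blast
  from add.hyps(3) assms(2) have "I = Br V Y" by auto
  with add.hyps(4) obtain a N' where a: "inj_on a V" "a ` V \<inter> U = {}"
    "ctx_opening U (override_on id a V) Y \<Delta>I N'" "NI = N' \<union> a ` V" "a ` V \<inter> N' = {}"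
    by (auto elim: item_opening_BrE)
  have NU: "N \<inter> U = {}" "NI \<inter> U = {}"
    using opening_fresh_names add.hyps(1,4) by blast+
  with IH(4) add.prems add.hyps(5) have dom_m: "\<forall>n\<in>U \<union> NI. m n = None" by blast
  define m' where "m' = (\<lambda>n. if n \<in> a ` V then Some (the_inv_into V a n) else m n)"
  have "\<forall>n\<in>N'. rot_ren m' b V U n = n"
    using a dom_m NU by (auto simp: rot_ren_def m'_def)
  moreover have "\<forall>v\<in>fv_ctx Y. rot_ren m' b V U (override_on id a V v) = id v"
    using assms(3) fv_ctx_subset_fv_forms[of Y] a(1,2) dom_m
    by (auto simp: override_on_def rot_ren_def m'_def the_inv_into_f_f)
  ultimately have "ctx_opening U id Y (ren (rot_ren m' b V U) ` \<Delta>I) N'"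
    using opening_ren_cong(1)[OF a(3)] by blast
  with IH(1) have "ctx_opening U id Y (\<Delta>b \<union> ren (rot_ren m' b V U) ` \<Delta>I) (Nb \<union> N')"
    using IH(2) a(4) add.hyps(5) by (intro ctx_opening_Un) auto
  moreover have "ren (rot_ren m' b V U) D = ren (rot_ren m b V U) D" if "D \<in> \<Delta>" for D
  proof (rule ren_cong)
    fix n
    assume "n \<in> lfv D"
    moreover have "ctx_forms G \<subseteq> ctx_forms Y"
    proof
      fix C
      assume "C \<in> ctx_forms G"
      then obtain J where "J \<in># G" "C \<in> formsi J" by (auto simp: ctx_forms_def)
      with assms(2) show "C \<in> ctx_forms Y" by (auto simp: formsi_Br simp del: formsi.simps)
    qed
    then have "fv_forms G \<subseteq> U" using assms(3) by (auto simp: fv_forms_def)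
    ultimately have "n \<in> U \<union> N" using opening_lfv(1)[OF add.hyps(1) that] by auto
    then show "rot_ren m' b V U n = rot_ren m b V U n"
      using a(2,4) add.hyps(5) by (auto simp: rot_ren_def m'_def)
  qed
  moreover have "\<forall>n\<in>dom m0. m' n = m0 n"
    using add.prems a(4) IH(3) by (auto simp: m'_def)
  moreover have "dom m' \<subseteq> dom m \<union> a ` V" by (auto simp: m'_def split: if_splits)
  then have "dom m' \<subseteq> dom m0 \<union> (N \<union> NI)" using IH(4) a(4) by blast
  ultimately show ?case
    using IH(2,5) a(4)
    by (intro exI[of _ m'] exI[of _ "\<Delta>b \<union> ren (rot_ren m' b V U) ` \<Delta>I"] exI[of _ "Nb \<union> N'"])
      (auto simp: id_def)
qed

lemma ctx_opening_rotation:
  assumes "ctx_opening U id (add_mset (Br V Y) G0) \<Delta> N"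
    and "fv_forms (add_mset (Br V Y) G0) \<subseteq> U" and "dom m0 \<inter> (N \<union> U) = {}"
  obtains m \<Delta>a Na \<Delta>b Nb where "ctx_opening U (override_on id b V) G0 \<Delta>a Na"
    "ctx_opening U id Y \<Delta>b Nb" "Na \<inter> Nb = {}" "Na \<union> Nb \<subseteq> N" "\<forall>n\<in>dom m0. m n = m0 n"
    "dom m \<subseteq> dom m0 \<union> N" "\<forall>D\<in>\<Delta>. ren (rot_ren m b V U) D \<in> \<Delta>a \<union> \<Delta>b"
proof -
  from ctx_opening_split[OF assms(1), of G0 "{#Br V Y#}"] obtain \<Delta>0 N0 \<Delta>1 N1 where
    s: "ctx_opening U id G0 \<Delta>0 N0" "ctx_opening U id {#Br V Y#} \<Delta>1 N1"
    "\<Delta> = \<Delta>0 \<union> \<Delta>1" "N = N0 \<union> N1" "N0 \<inter> N1 = {}"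
    by auto
  have fv: "fv_forms Y \<subseteq> U" "fv_ctx G0 \<subseteq> U"
    using assms(2) fv_ctx_subset_fv_forms[of G0]
    by (auto simp: fv_forms_def ctx_forms_def formsi_Br[symmetric])
  have "set_mset {#Br V Y#} \<subseteq> {Br V Y}" "dom m0 \<inter> (N1 \<union> U) = {}" using assms(3) s(4) by auto
  from bracket_entries_rotation[OF s(2) this(1) fv(1) this(2), where b = b] obtain m \<Delta>b Nb where
    Y: "ctx_opening U id Y \<Delta>b Nb" "Nb \<subseteq> N1" "\<forall>n\<in>dom m0. m n = m0 n" "dom m \<subseteq> dom m0 \<union> N1"
    "\<forall>D\<in>\<Delta>1. ren (rot_ren m b V U) D \<in> \<Delta>b"
    by blast
  have "(dom m0 \<union> N1) \<inter> (U \<union> N0) = {}"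
    using assms(3) s(4,5) opening_fresh_names(1)[OF s(2)] by auto
  with Y(4) have "\<forall>n\<in>U \<union> N0. m n = None" by blast
  moreover have "N0 \<inter> U = {}" using opening_fresh_names(1)[OF s(1)] by blast
  ultimately have "ctx_opening U (override_on id b V) G0 (ren (rot_ren m b V U) ` \<Delta>0) N0"
    using fv(2) by (intro opening_ren_cong(1)[OF s(1)]) (auto simp: rot_ren_def override_on_def)
  with Y s(3-5) show thesis by (intro that[of _ _ \<Delta>b Nb m]) auto
qed

lemma bracket_rotation:
  assumes op: "ctx_opening U id (add_mset (Br V Y) G0) \<Delta>r Nr"
    and fvG: "fv_forms (add_mset (Br V Y) G0) \<subseteq> U" and "finite U"
    and a: "finite V" "inj_on a V" "a ` V \<inter> U = {}"
    and opY: "ctx_opening U (override_on id a V) Y \<Delta>r' Nr'"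
    and J: "J \<in># Y" "item_opening U (override_on id a V) J \<Delta>J NJ"
    and disj: "Nr \<inter> (Nr' \<union> NJ \<union> a ` V) = {}" "a ` V \<inter> (Nr' \<union> NJ) = {}" "Nr' \<inter> NJ = {}"
  obtains \<mu> \<Delta>' N' where "ctx_opening U id (add_mset (Br V G0) Y) \<Delta>' N'"
    "item_opening U id J (ren \<mu> ` \<Delta>J) NJ" "N' \<inter> NJ = {}" "ren \<mu> ` (\<Delta>r \<union> \<Delta>r') \<subseteq> \<Delta>'"
    "\<forall>v\<in>V. \<mu> (a v) = v" "\<forall>n\<in>NJ. \<mu> n = n" "\<forall>v\<in>U. v \<notin> V \<longrightarrow> \<mu> v = v"
proof -
  let ?G' = "add_mset (Br V G0) Y"
  have fresh: "finite Nr" "Nr \<inter> U = {}" "finite Nr'" "Nr' \<inter> U = {}" "finite NJ" "NJ \<inter> U = {}"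
    using opening_fresh_names op opY J(2) by blast+
  with assms(3) a(1) have "finite (U \<union> Nr \<union> Nr' \<union> NJ \<union> a ` V)" by simp
  then obtain b :: "var \<Rightarrow> var" where b: "inj b" "range b \<inter> (U \<union> Nr \<union> Nr' \<union> NJ \<union> a ` V) = {}"
    by (rule fresh_renaming_exists)
  then have bV: "inj_on b V" "b ` V \<inter> U = {}" "b ` V \<inter> Nr = {}" "b ` V \<inter> (Nr' \<union> NJ) = {}"
    by (auto intro: inj_on_subset)
  define m0 where "m0 = (\<lambda>n. if n \<in> a ` V then Some (the_inv_into V a n) else None)"
  have dom_m0: "dom m0 = a ` V" by (auto simp: m0_def split: if_splits)
  have "dom m0 \<inter> (Nr \<union> U) = {}"
    using dom_m0 a(3) disj(1) by auto
  then obtain m \<Delta>a Na \<Delta>b Nb where R: "ctx_opening U (override_on id b V) G0 \<Delta>a Na"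
    "ctx_opening U id Y \<Delta>b Nb" "Na \<inter> Nb = {}" "Na \<union> Nb \<subseteq> Nr" "\<forall>n\<in>dom m0. m n = m0 n"
    "dom m \<subseteq> dom m0 \<union> Nr" "\<forall>D\<in>\<Delta>r. ren (rot_ren m b V U) D \<in> \<Delta>a \<union> \<Delta>b"
    by (rule ctx_opening_rotation[OF op fvG])
  define \<mu> where "\<mu> = rot_ren m b V U"
  have \<mu>_a: "\<forall>v\<in>V. \<mu> (a v) = v"
    using R(5) dom_m0 a(2) by (auto simp: \<mu>_def rot_ren_def m0_def the_inv_into_f_f)
  have \<mu>_fixed: "\<forall>n\<in>Nr' \<union> NJ. \<mu> n = n"
  proof
    fix n
    assume "n \<in> Nr' \<union> NJ"
    then have "n \<notin> a ` V \<union> Nr" "n \<notin> U"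
      using disj(1,2) fresh(4,6) by auto
    with R(6) dom_m0 have "n \<notin> dom m" "n \<notin> U" by auto
    then show "\<mu> n = n" by (simp add: \<mu>_def rot_ren_def domIff)
  qed
  have \<mu>_U: "\<forall>v\<in>U. v \<notin> V \<longrightarrow> \<mu> v = v"
  proof (intro ballI impI)
    fix v
    assume "v \<in> U" "v \<notin> V"
    then have "v \<notin> a ` V \<union> Nr" using a(3) fresh(2) by auto
    with R(6) dom_m0 have "v \<notin> dom m" by auto
    with \<open>v \<notin> V\<close> show "\<mu> v = v" by (simp add: \<mu>_def rot_ren_def domIff)
  qed
  have \<mu>_a_id: "\<forall>v\<in>U. \<mu> (override_on id a V v) = id v"
    using \<mu>_a \<mu>_U by (auto simp: override_on_def)
  have fvY: "fv_ctx Y \<subseteq> U"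
    using fv_forms_Br_subset[of V Y "add_mset (Br V Y) G0"] fvG fv_ctx_subset_fv_forms[of Y] by auto
  have "item_opening U id (Br V G0) \<Delta>a (Na \<union> b ` V)"
    using a(1) bV R(1,4) by (intro ctx_opening_item_opening.bracket) auto
  then have g1: "ctx_opening U id ?G' \<Delta>a (Na \<union> b ` V)" by (intro ctx_opening_single) auto
  have g2: "ctx_opening U id ?G' \<Delta>b Nb" by (rule ctx_opening_mono[OF R(2)]) auto
  have "ctx_opening U id Y (ren \<mu> ` \<Delta>r') Nr'"
    by (rule opening_ren_cong(1)[OF opY]) (use \<mu>_fixed \<mu>_a_id fvY in auto)
  then have g3: "ctx_opening U id ?G' (ren \<mu> ` \<Delta>r') Nr'" by (rule ctx_opening_mono) auto
  have "fvi J \<subseteq> U" using fvi_subset_fv_ctx[OF J(1)] fvY by blast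
  have gJ: "item_opening U id J (ren \<mu> ` \<Delta>J) NJ"
    by (rule opening_ren_cong(2)[OF J(2)]) (use \<mu>_fixed \<mu>_a_id \<open>fvi J \<subseteq> U\<close> in auto)
  have "ctx_opening U id ?G' ((\<Delta>a \<union> \<Delta>b) \<union> ren \<mu> ` \<Delta>r') ((Na \<union> b ` V \<union> Nb) \<union> Nr')"
    using R(3,4) bV disj by (intro ctx_opening_Un[OF g3] ctx_opening_Un[OF g2 g1]) auto
  moreover have "(Na \<union> b ` V \<union> Nb \<union> Nr') \<inter> NJ = {}"
    using R(4) bV disj by auto
  moreover have "ren \<mu> ` (\<Delta>r \<union> \<Delta>r') \<subseteq> (\<Delta>a \<union> \<Delta>b) \<union> ren \<mu> ` \<Delta>r'"
    using R(7) by (auto simp: \<mu>_def)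
  ultimately show thesis
    using gJ \<mu>_a \<mu>_fixed \<mu>_U by (intro that) auto
qed

section \<open>Focusing on a formula of an opening\<close>

primrec item_size :: "('f,'p) item \<Rightarrow> nat" where
  "item_size (Fm A) = 1"
| "item_size (Br V G) = Suc (sum_mset (image_mset item_size G))"

lemma item_size_less: "J \<in># G \<Longrightarrow> item_size J < item_size (Br V G)"
  by (auto dest!: multi_member_split)

abbreviation bracket_vars :: "(('f,'p) item multiset \<times> var set) list \<Rightarrow> var set" where
  "bracket_vars L \<equiv> (\<Union>GV\<in>set L. snd GV)"

lemma unnest_Nil [simp]: "unnest [] = {#}"
  by (simp add: unnest_def)

lemma unnest_Cons: "unnest ((G, V) # L) = foldl (\<lambda>acc GV. {#Br (snd GV) (acc + fst GV)#}) {#Br V G#} L"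
  by (simp add: unnest_def)

lemma ctx_forms_nest: "ctx_forms (nest L X) = (\<Union>GV\<in>set L. ctx_forms (fst GV)) \<union> ctx_forms X"
  by (induct L) (auto simp del: formsi.simps simp: formsi_Br)

lemma ctx_forms_unnest: "ctx_forms (unnest L) = (\<Union>GV\<in>set L. ctx_forms (fst GV))"
proof -
  have "ctx_forms (foldl (\<lambda>acc GV. {#Br (snd GV) (acc + fst GV)#}) A L) =
      ctx_forms A \<union> (\<Union>GV\<in>set L. ctx_forms (fst GV))" for A
    by (induct L arbitrary: A) (auto simp del: formsi.simps simp: formsi_Br)
  then show ?thesis by (simp add: unnest_def)
qed

text \<open>Peeling the outermost bracket [Y]_V off a nesting of the rotated
context [G0]_V, Y.\<close>

lemma nest_rotation:
  assumes "J \<in># Y" and "add_mset (Br V G0) Y = nest L' (add_mset (Fm F) Gi)"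
    and "case L' of [] \<Rightarrow> J = Fm F | (H, V') # L3 \<Rightarrow> J = Br V' (nest L3 (add_mset (Fm F) Gi))"
  obtains L Gi' where "Y = nest L (add_mset (Fm F) Gi')"
    "unnest ((G0, V) # L) + Gi' = unnest L' + Gi" "bracket_vars L = bracket_vars L'"
proof (cases L')
  case Nil
  with assms have "J = Fm F" "add_mset (Br V G0) Y = add_mset (Fm F) Gi" by auto
  moreover from assms(1) \<open>J = Fm F\<close> have "Y = add_mset (Fm F) (Y - {#Fm F#})" by simp
  ultimately have "Gi = add_mset (Br V G0) (Y - {#Fm F#})"
    by (metis add_mset_remove_trivial diff_union_swap2 union_single_eq_member)
  with Nil \<open>Y = add_mset (Fm F) (Y - {#Fm F#})\<close> show thesis
    by (intro that[of "[]" "Y - {#Fm F#}"]) (auto simp: unnest_def)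
next
  case (Cons GV L3)
  obtain H V' where GV: "GV = (H, V')" by fastforce
  with Cons assms(3) have J: "J = Br V' (nest L3 (add_mset (Fm F) Gi))" by simp
  with assms(2) Cons GV have "add_mset (Br V G0) Y = add_mset J H" by simp
  with assms(1) have "H = add_mset (Br V G0) (Y - {#J#})"
    by (metis add_mset_remove_trivial diff_union_swap2 union_mset_add_mset_left)
  moreover have "Y = add_mset J (Y - {#J#})" using assms(1) by simp
  ultimately show thesis
    using Cons GV J by (intro that[of "(Y - {#J#}, V') # L3" Gi]) (auto simp: unnest_Cons add.commute)
qed

definition renames_out :: "var set \<Rightarrow> var set \<Rightarrow> (var \<Rightarrow> var) \<Rightarrow> bool" where
  "renames_out U W \<theta> \<longleftrightarrow> (\<forall>v\<in>U. (v \<in> W \<longrightarrow> \<theta> v \<notin> U) \<and> (v \<notin> W \<longrightarrow> \<theta> v = v))"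

lemma renames_out_id: "renames_out U {} id"
  by (simp add: renames_out_def)

lemma renames_out_override_on:
  assumes "renames_out U W \<theta>" and "a ` V \<inter> U = {}"
  shows "renames_out U (V \<union> W) (override_on id a (V \<inter> U) \<circ> \<theta>)"
  using assms by (force simp: renames_out_def override_on_def)

lemma renames_out_fixes: "renames_out U W \<theta> \<Longrightarrow> \<forall>v\<in>U. \<theta> v \<in> U \<longrightarrow> \<theta> v = v \<and> v \<notin> W"
  by (auto simp: renames_out_def)

lemma ren_override_on_cancel:
  assumes "lfv D \<subseteq> override_on id a V ` U \<union> N" and "N \<inter> U = {}"
    and "\<forall>v\<in>V. \<mu> (a v) = v" "\<forall>n\<in>N. \<mu> n = n" "\<forall>v\<in>U. v \<notin> V \<longrightarrow> \<mu> v = v"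
  shows "ren (override_on id a (V \<inter> U)) (ren \<mu> D) = D"
proof -
  have "override_on id a (V \<inter> U) (\<mu> n) = n" if n: "n \<in> lfv D" for n
  proof -
    consider (bound) v where "v \<in> U" "v \<in> V" "n = a v" | (ambient) "n \<in> U" "n \<notin> V"
      | (fresh) "n \<in> N"
      using assms(1) n by (auto simp: override_on_def)
    then show ?thesis
      by cases (use assms(2-5) in \<open>auto simp: override_on_def\<close>)
  qed
  then show ?thesis by (simp add: ren_comp ren_cong[of D _ id])
qed

text \<open>G = nest L (F, Gi) is the decomposition of G required by the LJB left rule
with principal formula F; \<mu> carries the opening over to the premise context.\<close>

lemma item_opening_focus:
  assumes "ctx_opening U id G \<Delta>r Nr" and "I \<in># G" and "item_opening U id I \<Delta>I NI"
    and "Nr \<inter> NI = {}" and "D \<in> \<Delta>I" and "fv_forms G \<subseteq> U" and "finite U"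
  shows "\<exists>L Gi F \<theta> \<mu> \<Delta>' N'. G = nest L (add_mset (Fm F) Gi)
    \<and> (case L of [] \<Rightarrow> I = Fm F | (H, V) # L3 \<Rightarrow> I = Br V (nest L3 (add_mset (Fm F) Gi)))
    \<and> ctx_opening U id (unnest L + Gi + {#Fm F#}) \<Delta>' N' \<and> ren \<mu> ` (\<Delta>r \<union> \<Delta>I) \<subseteq> \<Delta>'
    \<and> ren \<mu> D = lnf [] F \<and> D = ren \<theta> (lnf [] F) \<and> renames_out U (bracket_vars L) \<theta>"
  using assms
proof (induct "item_size I" arbitrary: G \<Delta>r Nr I \<Delta>I NI D rule: less_induct)
  case less
  show ?case
  proof (cases I)
    case (Fm A)
    with less.prems(3,5) have "D = lnf [] A" "NI = {}" by (auto elim: item_opening_FmE)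
    moreover have "G = add_mset (Fm A) (G - {#Fm A#})" using less.prems(2) Fm by simp
    moreover have "ctx_opening U id G (\<Delta>r \<union> \<Delta>I) (Nr \<union> NI)"
      using less.prems(1-4) by (rule ctx_opening_item_opening.add)
    ultimately show ?thesis
      using Fm renames_out_id
      by (intro exI[of _ "[]"] exI[of _ "G - {#Fm A#}"] exI[of _ A] exI[of _ id] exI[of _ id]) auto
  next
    case (Br V Y)
    with less.prems(3) obtain a NY where a: "finite V" "inj_on a V" "a ` V \<inter> U = {}"
      "ctx_opening U (override_on id a V) Y \<Delta>I NY" "a ` V \<inter> NY = {}" "NI = NY \<union> a ` V"
      by (auto elim: item_opening_BrE)
    from ctx_opening_locate[OF a(4) less.prems(5)] obtain J \<Delta>J NJ \<Delta>r' Nr' where J: "J \<in># Y"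
      "item_opening U (override_on id a V) J \<Delta>J NJ" "D \<in> \<Delta>J"
      "ctx_opening U (override_on id a V) Y \<Delta>r' Nr'" "\<Delta>I = \<Delta>r' \<union> \<Delta>J" "NY = Nr' \<union> NJ"
      "Nr' \<inter> NJ = {}"
      by blast
    define G0 where "G0 = G - {#Br V Y#}"
    have G: "G = add_mset (Br V Y) G0" using less.prems(2) Br by (simp add: G0_def)
    have "Nr \<inter> (Nr' \<union> NJ \<union> a ` V) = {}" "a ` V \<inter> (Nr' \<union> NJ) = {}"
      using less.prems(4) a(5,6) J(6) by auto
    then obtain \<mu>1 \<Delta>1 N1 where R: "ctx_opening U id (add_mset (Br V G0) Y) \<Delta>1 N1"
      "item_opening U id J (ren \<mu>1 ` \<Delta>J) NJ" "N1 \<inter> NJ = {}" "ren \<mu>1 ` (\<Delta>r \<union> \<Delta>r') \<subseteq> \<Delta>1"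
      "\<forall>v\<in>V. \<mu>1 (a v) = v" "\<forall>n\<in>NJ. \<mu>1 n = n" "\<forall>v\<in>U. v \<notin> V \<longrightarrow> \<mu>1 v = v"
      by (rule bracket_rotation[OF less.prems(1)[unfolded G] less.prems(6)[unfolded G] less.prems(7)
          a(1-3) J(4) J(1,2) _ _ J(7)])
    have "ctx_forms (add_mset (Br V G0) Y) = ctx_forms G"
      using G by (simp add: formsi_Br Un_commute del: formsi.simps)
    then have fvG': "fv_forms (add_mset (Br V G0) Y) \<subseteq> U" using less.prems(6) by (simp add: fv_forms_def)
    have smaller: "item_size J < item_size I" using item_size_less[OF J(1)] Br by simp
    have J': "J \<in># add_mset (Br V G0) Y" "ren \<mu>1 D \<in> ren \<mu>1 ` \<Delta>J" using J(1,3) by auto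
    obtain L' Gi F \<theta>' \<mu>2 \<Delta>' N' where IH: "add_mset (Br V G0) Y = nest L' (add_mset (Fm F) Gi)"
      "case L' of [] \<Rightarrow> J = Fm F | (H, V') # L3 \<Rightarrow> J = Br V' (nest L3 (add_mset (Fm F) Gi))"
      "ctx_opening U id (unnest L' + Gi + {#Fm F#}) \<Delta>' N'" "ren \<mu>2 ` (\<Delta>1 \<union> ren \<mu>1 ` \<Delta>J) \<subseteq> \<Delta>'"
      "ren \<mu>2 (ren \<mu>1 D) = lnf [] F" "ren \<mu>1 D = ren \<theta>' (lnf [] F)" "renames_out U (bracket_vars L') \<theta>'"
      using less.hyps[OF smaller R(1) J'(1) R(2,3) J'(2) fvG' less.prems(7)]
      by (elim exE conjE) (rule that, assumption+)
    from nest_rotation[OF J(1) IH(1,2)] obtain L Gi' where L: "Y = nest L (add_mset (Fm F) Gi')"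
      "unnest ((G0, V) # L) + Gi' = unnest L' + Gi" "bracket_vars L = bracket_vars L'"
      by blast
    define \<theta> where "\<theta> = override_on id a (V \<inter> U) \<circ> \<theta>'"
    have D: "D = ren \<theta> (lnf [] F)"
    proof -
      have "\<Union> (fv ` formsi J) \<subseteq> U"
        using fv_formsi_subset[OF J(1)] fv_forms_Br_subset[of V Y G] less.prems(2,6) Br by auto
      then have "override_on id a V ` \<Union> (fv ` formsi J) \<subseteq> override_on id a V ` U"
        by (rule image_mono)
      with opening_lfv(2)[OF J(2,3)] have "lfv D \<subseteq> override_on id a V ` U \<union> NJ" by blast
      moreover have "NJ \<inter> U = {}" using opening_fresh_names(2)[OF J(2)] by blast
      ultimately have "D = ren (override_on id a (V \<inter> U)) (ren \<mu>1 D)"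
        using R(5-7) by (simp add: ren_override_on_cancel)
      also have "\<dots> = ren \<theta> (lnf [] F)" using IH(6) by (simp add: \<theta>_def ren_comp)
      finally show ?thesis .
    qed
    have \<mu>: "ren (\<mu>2 \<circ> \<mu>1) ` (\<Delta>r \<union> \<Delta>I) \<subseteq> \<Delta>'"
      using R(4) IH(4) J(5) by (auto simp: ren_comp[symmetric])
    have \<theta>: "renames_out U (bracket_vars ((G0, V) # L)) \<theta>"
      using renames_out_override_on[OF IH(7) a(3)] L(3) by (simp add: \<theta>_def)
    show ?thesis
      apply (rule exI[of _ "(G0, V) # L"], rule exI[of _ Gi'], rule exI[of _ F], rule exI[of _ \<theta>],
          rule exI[of _ "\<mu>2 \<circ> \<mu>1"], rule exI[of _ \<Delta>'], rule exI[of _ N'])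
      using G Br L(1,2) IH(3,5) D[symmetric] \<mu> \<theta> by (auto simp: ren_comp add.assoc)
  qed
qed

lemma ctx_opening_focus:
  assumes "ctx_opening U id G \<Delta> N" and "D \<in> \<Delta>" and "fv_forms G \<subseteq> U" and "finite U"
  obtains L Gi F \<theta> \<mu> \<Delta>' N' where "G = nest L (add_mset (Fm F) Gi)"
    "ctx_opening U id (unnest L + Gi + {#Fm F#}) \<Delta>' N'" "ren \<mu> ` \<Delta> \<subseteq> \<Delta>'"
    "ren \<mu> D = lnf [] F" "D = ren \<theta> (lnf [] F)" "renames_out U (bracket_vars L) \<theta>"
proof -
  from ctx_opening_locate[OF assms(1,2)] obtain I \<Delta>I NI \<Delta>r Nr where I: "I \<in># G"
    "item_opening U id I \<Delta>I NI" "D \<in> \<Delta>I" "ctx_opening U id G \<Delta>r Nr" "\<Delta> = \<Delta>r \<union> \<Delta>I"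
    "Nr \<inter> NI = {}"
    by blast
  from item_opening_focus[OF I(4,1,2,6,3) assms(3,4)]
  obtain L Gi F \<theta> \<mu> \<Delta>' N' where "G = nest L (add_mset (Fm F) Gi)"
    "ctx_opening U id (unnest L + Gi + {#Fm F#}) \<Delta>' N'" "ren \<mu> ` (\<Delta>r \<union> \<Delta>I) \<subseteq> \<Delta>'"
    "ren \<mu> D = lnf [] F" "D = ren \<theta> (lnf [] F)" "renames_out U (bracket_vars L) \<theta>"
    by (elim exE conjE) (rule that, assumption+)
  with I(5) show thesis by (intro that) auto
qed

section \<open>Simulating LJ+ derivations in LJB\<close>

definition all_vars :: "('f,'p) form \<Rightarrow> var set" where
  "all_vars A = fv A \<union> set (bvl A)"

lemma wf_vars_ImpD: "wf_vars (Imp A B) \<Longrightarrow> wf_vars A \<and> wf_vars B"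
  by (auto simp: wf_vars_def)

lemma wf_vars_AllD: "wf_vars (All y B) \<Longrightarrow> wf_vars B"
  by (auto simp: wf_vars_def)

lemma wf_vars_foldr_ImpD: "wf_vars (foldr Imp As P) \<Longrightarrow> a \<in> set As \<Longrightarrow> wf_vars a"
  by (induct As) (auto dest: wf_vars_ImpD)

lemma neg_foldr_ImpD: "neg (foldr Imp As P) \<Longrightarrow> a \<in> set As \<Longrightarrow> pos a"
  by (induct As) auto

lemma all_vars_Imp: "all_vars (Imp A B) = all_vars A \<union> all_vars B"
  by (auto simp: all_vars_def)

lemma all_vars_All: "all_vars (All y B) = insert y (all_vars B)"
  by (auto simp: all_vars_def)

lemma all_vars_foldr_Imp: "a \<in> set As \<Longrightarrow> all_vars a \<subseteq> all_vars (foldr Imp As P)"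
  by (induct As) (auto simp: all_vars_Imp)

lemma fvts_subset_fv_foldr_Imp: "fvts ts \<subseteq> fv (foldr Imp As (Atom p ts))"
  by (induct As) auto

lemma foldr_Imp_Atom_inject: "foldr Imp As (Atom p ts) = foldr Imp Bs (Atom q us) \<Longrightarrow> As = Bs"
proof (induct As arbitrary: Bs)
  case Nil
  then show ?case by (cases Bs) auto
next
  case (Cons A As)
  then show ?case by (cases Bs) auto
qed

lemma finite_fvt: "finite (fvt t)"
  by (induct t) auto

lemma finite_all_vars: "finite (all_vars A)"
proof -
  have "finite (fv A)" by (induct A) (auto simp: fvts_def finite_fvt)
  then show ?thesis by (simp add: all_vars_def)
qed

lemma rel_mset_memD: "rel_mset R M N \<Longrightarrow> x \<in># M \<Longrightarrow> \<exists>y. y \<in># N \<and> R x y"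
  by (induct rule: rel_mset_induct) auto

lemma normal_empty: "normal {#}"
  unfolding normal_def by (auto elim: cstep.cases)

text \<open>The LJB sequent G \<turnstile> B simulates the LJ+ sequent \<Gamma> \<turnstile> A up to the renaming
\<sigma> of free names: B is \<sigma> A up to alpha-equivalence and some opening of G contains
\<sigma> \<Gamma>.\<close>

definition simulates ::
    "var set \<Rightarrow> (var \<Rightarrow> var) \<Rightarrow> ('f,'p) form multiset \<Rightarrow> ('f,'p) form
     \<Rightarrow> ('f,'p) item multiset \<Rightarrow> ('f,'p) form \<Rightarrow> bool" where
  "simulates U \<sigma> \<Gamma> A G B \<longleftrightarrow>
     ljb_seq G B \<and> (\<forall>C\<in>ctx_forms G. all_vars C \<subseteq> U) \<and> all_vars B \<subseteq> U
     \<and> (\<exists>\<Delta> N. ctx_opening U id G \<Delta> N \<and> (\<forall>D\<in>#\<Gamma>. ren \<sigma> (lnf [] D) \<in> \<Delta>))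
     \<and> ren \<sigma> (lnf [] A) = lnf [] B"

lemma simulates_nfI:
  assumes "nf_strategy nf" and "ctx_opening U id G \<Delta> N" and "\<forall>D\<in>#\<Gamma>. ren \<sigma> (lnf [] D) \<in> \<Delta>"
    and "\<forall>C\<in>ctx_forms G. wf_vars C \<and> neg C \<and> all_vars C \<subseteq> U"
    and "wf_vars B" "pos B" "all_vars B \<subseteq> U" "ren \<sigma> (lnf [] A) = lnf [] B"
  shows "simulates U \<sigma> \<Gamma> A (nf G) B"
proof -
  from nf_strategy_ctx_opening[OF assms(1,2)] obtain N' where "ctx_opening U id (nf G) \<Delta> N'" ..
  moreover have "normal (nf G)" using assms(1) by (simp add: nf_strategy_def)
  ultimately show ?thesis
    using assms nf_strategy_ctx_forms[OF assms(1), of G] by (auto simp: simulates_def ljb_seq_def)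
qed

lemma simulates_imp_R:
  assumes "nf_strategy nf" and "simulates U \<sigma> \<Gamma> (Imp A B) G C"
  obtains C1 C2 where "C = Imp C1 C2" "simulates U \<sigma> (add_mset A \<Gamma>) B (nf (add_mset (Fm C1) G)) C2"
proof -
  from assms(2) obtain \<Delta> N where seq: "ljb_seq G C" and U: "\<forall>C\<in>ctx_forms G. all_vars C \<subseteq> U"
    "all_vars C \<subseteq> U" and op: "ctx_opening U id G \<Delta> N" "\<forall>D\<in>#\<Gamma>. ren \<sigma> (lnf [] D) \<in> \<Delta>"
    and eq: "ren \<sigma> (lnf [] (Imp A B)) = lnf [] C"
    by (auto simp: simulates_def)
  from ren_lnf_Imp_eqD[of \<sigma> A B id C] eq obtain C1 C2 where C: "C = Imp C1 C2"
    "ren \<sigma> (lnf [] A) = lnf [] C1" "ren \<sigma> (lnf [] B) = lnf [] C2"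
    by auto
  have "ctx_opening U id (add_mset (Fm C1) G) \<Delta> N" by (rule ctx_opening_mono[OF op(1)]) auto
  then have "ctx_opening U id (add_mset (Fm C1) G) (insert (lnf [] C1) \<Delta>) N"
    using ctx_opening_insert_form[of U id _ \<Delta> N C1] by simp
  moreover have "wf_vars C1" "neg C1" "wf_vars C2" "pos C2"
    using seq C(1) by (auto simp: ljb_seq_def dest: wf_vars_ImpD)
  ultimately have "simulates U \<sigma> (add_mset A \<Gamma>) B (nf (add_mset (Fm C1) G)) C2"
    using seq U op(2) C by (intro simulates_nfI[OF assms(1)]) (auto simp: ljb_seq_def all_vars_Imp)
  with C(1) show thesis by (rule that)
qed

lemma simulates_alpha:
  assumes "simulates U \<sigma> \<Gamma>' A' G B" and "rel_mset alpha \<Gamma> \<Gamma>'" and "alpha A A'"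
  shows "simulates U \<sigma> \<Gamma> A G B"
proof -
  have "ren \<sigma> (lnf [] D) \<in> \<Delta>" if "\<forall>D'\<in>#\<Gamma>'. ren \<sigma> (lnf [] D') \<in> \<Delta>" "D \<in># \<Gamma>" for D \<Delta>
    using rel_mset_memD[OF assms(2) that(2)] that(1) by (auto simp: alpha_lnf_eq)
  with assms(1) show ?thesis by (auto simp: simulates_def alpha_lnf_eq[OF assms(3)])
qed

text \<open>The variables bound by the new bracket are renamed apart in the opening,
and \<sigma> is adjusted accordingly; the eigenvariable condition makes this
harmless for \<Gamma>.\<close>

lemma simulates_all_R:
  assumes "nf_strategy nf" and "finite U" and "simulates U \<sigma> \<Gamma> (All x A) G B"
    and "x \<notin> (\<Union>D\<in>set_mset \<Gamma>. fv D)"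
  obtains y B0 \<sigma>' where "B = All y B0" "simulates U \<sigma>' \<Gamma> A (nf {#Br (set (bvl B)) G#}) B0"
proof -
  from assms(3) obtain \<Delta> N where seq: "ljb_seq G B" and U: "\<forall>C\<in>ctx_forms G. all_vars C \<subseteq> U"
    "all_vars B \<subseteq> U" and op: "ctx_opening U id G \<Delta> N" "\<forall>D\<in>#\<Gamma>. ren \<sigma> (lnf [] D) \<in> \<Delta>"
    and eq: "ren \<sigma> (lnf [] (All x A)) = lnf [] B"
    by (auto simp: simulates_def)
  from ren_lnf_All_eqD[OF eq] obtain y B0 where B: "B = All y B0"
    "ren (\<sigma>(x := y)) (lnf [] A) = lnf [] B0"
    by blast
  define V where "V = set (bvl B)"
  have VU: "V \<subseteq> U" using U(2) by (auto simp: V_def all_vars_def)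
  have N: "finite N" "N \<inter> U = {}" using opening_fresh_names(1)[OF op(1)] by auto
  from assms(2) N(1) have "finite (U \<union> N)" by simp
  then obtain a :: "var \<Rightarrow> var" where a: "inj a" "range a \<inter> (U \<union> N) = {}"
    by (rule fresh_renaming_exists)
  define \<pi> where "\<pi> = override_on id a V"
  have "\<forall>n\<in>N. \<pi> n = n" using N VU by (auto simp: \<pi>_def override_on_def)
  from opening_ren(1)[OF op(1) this] have "ctx_opening U (override_on id a V) G (ren \<pi> ` \<Delta>) N"
    by (simp add: \<pi>_def)
  moreover have "a ` V \<inter> U = {}" "a ` V \<inter> N = {}" "inj_on a V"
    using a by (auto intro: inj_on_subset)
  ultimately have "item_opening U id (Br V G) (ren \<pi> ` \<Delta>) (N \<union> a ` V)"
    by (intro ctx_opening_item_opening.bracket) (auto simp: V_def)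
  then have op': "ctx_opening U id {#Br V G#} (ren \<pi> ` \<Delta>) (N \<union> a ` V)"
    by (intro ctx_opening_single) auto
  define \<sigma>' where "\<sigma>' = (\<pi> \<circ> \<sigma>)(x := y)"
  have "ren \<sigma>' (lnf [] D) = ren \<pi> (ren \<sigma> (lnf [] D))" if "D \<in># \<Gamma>" for D
  proof -
    have "x \<notin> fv D" using assms(4) that by blast
    then have "ren \<sigma>' (lnf [] D) = ren (\<pi> \<circ> \<sigma>) (lnf [] D)"
      by (intro ren_cong) (auto simp: \<sigma>'_def lfv_lnf)
    then show ?thesis by (simp add: ren_comp)
  qed
  with op(2) have \<Gamma>': "\<forall>D\<in>#\<Gamma>. ren \<sigma>' (lnf [] D) \<in> ren \<pi> ` \<Delta>" by auto
  have "\<sigma>' z = (\<sigma>(x := y)) z" if "z \<in> fv A" for z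
  proof (cases "z = x")
    case False
    have "\<sigma> ` (fv A - {x}) = fv B"
      using arg_cong[OF eq, of lfv] by (simp add: lfv_ren lfv_lnf)
    with that False have "\<sigma> z \<in> fv B" by blast
    moreover have "fv B \<inter> V = {}" using seq by (auto simp: ljb_seq_def wf_vars_def V_def)
    ultimately show ?thesis using False by (auto simp: \<sigma>'_def \<pi>_def override_on_def)
  qed (simp add: \<sigma>'_def)
  then have "ren \<sigma>' (lnf [] A) = lnf [] B0"
    using B(2) by (metis lfv_lnf Diff_empty list.set(1) ren_cong)
  moreover have "wf_vars B0" "pos B0" "all_vars B0 \<subseteq> U"
    using seq U(2) B(1) by (auto simp: ljb_seq_def all_vars_All dest: wf_vars_AllD)
  moreover have "ctx_forms {#Br V G#} = ctx_forms G"
    by (simp add: formsi_Br del: formsi.simps)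
  ultimately have "simulates U \<sigma>' \<Gamma> A (nf {#Br V G#}) B0"
    using seq U(1) \<Gamma>' op' by (intro simulates_nfI[OF assms(1)]) (auto simp: ljb_seq_def)
  with B(1) V_def show thesis by (intro that) auto
qed

text \<open>The principal formula F of the LJ+ left rule is found in an opening of G,
hence inside nested brackets of G. The atom of F cannot mention a bracket
variable: the renaming \<theta> produced by focusing moves these out of U, yet it
maps the atom of F to that of B.\<close>

lemma simulates_imp_L:
  assumes "nf_strategy nf" and "finite U" and "simulates U \<sigma> (add_mset F \<Gamma>) (Atom p ts) G B"
    and "F = foldr Imp As (Atom p ts)"
  obtains L Gi As' us \<sigma>' where "B = Atom p us"
    "G = nest L (add_mset (Fm (foldr Imp As' (Atom p us))) Gi)"
    "fvts us \<inter> bracket_vars L = {}"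
    "list_all2 (\<lambda>a a'. simulates U \<sigma>' (add_mset F \<Gamma>) a
       (nf (unnest L + Gi + {#Fm (foldr Imp As' (Atom p us))#})) a') As As'"
proof -
  from assms(3) obtain \<Delta> N where seq: "ljb_seq G B" and U: "\<forall>C\<in>ctx_forms G. all_vars C \<subseteq> U"
    "all_vars B \<subseteq> U" and op: "ctx_opening U id G \<Delta> N" "\<forall>D\<in>#add_mset F \<Gamma>. ren \<sigma> (lnf [] D) \<in> \<Delta>"
    and eq: "ren \<sigma> (lnf [] (Atom p ts)) = lnf [] B"
    by (auto simp: simulates_def)
  from ren_lnf_Atom_eqD[of \<sigma> p ts id B] eq obtain us where B: "B = Atom p us"
    "map (ren_trm \<sigma> \<circ> lnt []) ts = map (lnt []) us"
    by (auto simp: comp_def)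
  have "fv_forms G \<subseteq> U" using U(1) by (auto simp: fv_forms_def all_vars_def)
  moreover have "ren \<sigma> (lnf [] F) \<in> \<Delta>" using op(2) by simp
  ultimately obtain L Gi F' \<theta> \<mu> \<Delta>' N' where focus: "G = nest L (add_mset (Fm F') Gi)"
    "ctx_opening U id (unnest L + Gi + {#Fm F'#}) \<Delta>' N'" "ren \<mu> ` \<Delta> \<subseteq> \<Delta>'"
    "ren \<mu> (ren \<sigma> (lnf [] F)) = lnf [] F'" "ren \<sigma> (lnf [] F) = ren \<theta> (lnf [] F')"
    "renames_out U (bracket_vars L) \<theta>"
    using ctx_opening_focus[OF op(1) _ _ assms(2)] by metis
  have F': "F' \<in> ctx_forms G" using focus(1) by (simp add: ctx_forms_nest)
  from ren_lnf_foldr_Imp_eqD[of \<sigma> As p ts \<theta> F'] focus(5) assms(4)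
  obtain As' us' where As': "F' = foldr Imp As' (Atom p us')"
    "map (ren_trm \<sigma> \<circ> lnt []) ts = map (ren_trm \<theta> \<circ> lnt []) us'"
    by auto
  have "map (ren_trm \<theta> \<circ> lnt []) us' = map (lnt []) us" using As'(2) B(2) by simp
  moreover have "fvts us' \<subseteq> U"
    using U(1) F' As'(1) fvts_subset_fv_foldr_Imp[of us' As' p] by (auto simp: all_vars_def)
  moreover have "fvts us \<subseteq> U" using U(2) B(1) by (auto simp: all_vars_def)
  ultimately have "us' = us \<and> fvts us' \<inter> bracket_vars L = {}"
    using renames_out_fixes[OF focus(6)] by (rule ren_trms_lnt_eq_fixed)
  then have us: "us' = us" "fvts us \<inter> bracket_vars L = {}" by auto
  have "ren (\<mu> \<circ> \<sigma>) (lnf [] (foldr Imp As (Atom p ts))) = ren id (lnf [] F')"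
    using focus(4) assms(4) by (simp add: ren_comp)
  from ren_lnf_foldr_Imp_eqD[OF this] As'(1) have rel:
    "list_all2 (\<lambda>a a'. ren (\<mu> \<circ> \<sigma>) (lnf [] a) = lnf [] a') As As'"
    by (auto dest: foldr_Imp_Atom_inject)
  define X where "X = unnest L + Gi + {#Fm F'#}"
  have ctx_X: "ctx_forms X = ctx_forms G"
    using focus(1) by (auto simp: X_def ctx_forms_unnest ctx_forms_nest)
  have \<Gamma>: "\<forall>D\<in>#add_mset F \<Gamma>. ren (\<mu> \<circ> \<sigma>) (lnf [] D) \<in> \<Delta>'"
    using op(2) focus(3) by (auto simp: ren_comp[symmetric])
  have "simulates U (\<mu> \<circ> \<sigma>) (add_mset F \<Gamma>) a (nf X) a'"
    if "a' \<in> set As'" "ren (\<mu> \<circ> \<sigma>) (lnf [] a) = lnf [] a'" for a a'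
  proof (rule simulates_nfI[OF assms(1) focus(2)[folded X_def] \<Gamma>])
    have "wf_vars F'" "neg F'" "all_vars F' \<subseteq> U" using seq U(1) F' by (auto simp: ljb_seq_def)
    then show "wf_vars a'" "pos a'" "all_vars a' \<subseteq> U"
      using that(1) As'(1) wf_vars_foldr_ImpD neg_foldr_ImpD all_vars_foldr_Imp by blast+
    show "\<forall>C\<in>ctx_forms X. wf_vars C \<and> neg C \<and> all_vars C \<subseteq> U"
      using seq U(1) ctx_X by (auto simp: ljb_seq_def)
  qed (use that(2) in simp)
  with rel have "list_all2 (\<lambda>a a'. simulates U (\<mu> \<circ> \<sigma>) (add_mset F \<Gamma>) a (nf X) a') As As'"
    by (auto simp: list_all2_conv_all_nth)
  with B(1) focus(1) As'(1) us show thesis by (intro that) (auto simp: X_def)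
qed

lemma ljp_simulated_by_ljb:
  assumes "nf_strategy nf" and "finite U"
  shows "ljp \<Gamma> A \<Longrightarrow> simulates U \<sigma> \<Gamma> A G B \<Longrightarrow> ljb nf G B"
proof (induct arbitrary: \<sigma> G B rule: ljp.induct)
  case (lj_imp_L F As p ts \<Gamma>)
  from simulates_imp_L[OF assms lj_imp_L.prems lj_imp_L.hyps(1)] obtain L Gi As' us \<sigma>'
    where B: "B = Atom p us" and G: "G = nest L (add_mset (Fm (foldr Imp As' (Atom p us))) Gi)"
      and us: "fvts us \<inter> bracket_vars L = {}"
      and As': "list_all2 (\<lambda>a a'. simulates U \<sigma>' (add_mset F \<Gamma>) a
         (nf (unnest L + Gi + {#Fm (foldr Imp As' (Atom p us))#})) a') As As'" .
  have "ljb nf (nf (unnest L + Gi + {#Fm (foldr Imp As' (Atom p us))#})) a'" if "a' \<in> set As'" for a'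
  proof -
    from that obtain i where "i < length As'" "a' = As' ! i" by (auto simp: in_set_conv_nth)
    with As' have "As ! i \<in> set As"
      "simulates U \<sigma>' (add_mset F \<Gamma>) (As ! i) (nf (unnest L + Gi + {#Fm (foldr Imp As' (Atom p us))#})) a'"
      by (auto simp: list_all2_conv_all_nth)
    with lj_imp_L.hyps(3) show ?thesis by blast
  qed
  moreover have "ljb_seq G (Atom p us)" using lj_imp_L.prems B by (simp add: simulates_def)
  ultimately show ?case using G us B by (auto intro: ljb_imp_L)
next
  case (lj_all_R \<Gamma> A x)
  from simulates_all_R[OF assms lj_all_R.prems lj_all_R.hyps(3)] obtain y B0 \<sigma>'
    where B: "B = All y B0" and sim: "simulates U \<sigma>' \<Gamma> A (nf {#Br (set (bvl B)) G#}) B0" .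
  from lj_all_R.hyps(2)[OF sim] have "ljb nf (nf {#Br (set (bvl B)) G#}) B0" .
  moreover have "ljb_seq G B" using lj_all_R.prems by (simp add: simulates_def)
  ultimately show ?case unfolding B by (rule ljb_all_R)
next
  case (lj_imp_R A1 \<Gamma> A2)
  from simulates_imp_R[OF assms(1) lj_imp_R.prems] obtain C1 C2
    where B: "B = Imp C1 C2" and sim: "simulates U \<sigma> (add_mset A1 \<Gamma>) A2 (nf (add_mset (Fm C1) G)) C2" .
  from lj_imp_R.hyps(2)[OF sim] have "ljb nf (nf (add_mset (Fm C1) G)) C2" .
  moreover have "ljb_seq G B" using lj_imp_R.prems by (simp add: simulates_def)
  ultimately show ?case unfolding B by (rule ljb_imp_R)
next
  case (lj_alpha \<Gamma> A \<Gamma>' A')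
  then show ?case by (blast intro: simulates_alpha)
qed

theorem proposition8:
  fixes A :: "('f,'p) form"
    and nf :: "('f,'p) item multiset \<Rightarrow> ('f,'p) item multiset"
  assumes "nf_strategy nf"
    and "wf_vars A"
    and "ljp {#} A"
  shows "ljb nf {#} A"
proof -
  have "simulates (all_vars A) id {#} A {#} A"
    using assms(2) ljp_pos[OF assms(3)] normal_empty ctx_opening_item_opening.empty
    by (auto simp: simulates_def ljb_seq_def intro!: exI[of _ "{}"])
  then show ?thesis
    by (rule ljp_simulated_by_ljb[OF assms(1) finite_all_vars assms(3)])
qed

end
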